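(* Assume (A1) and (A2) as stated in the context. Then for every $\varphi\in\mathcal{C}_b^2(\Theta\times\mathbb{R}^{dT})\cap\mathcal{B}_b(\Theta\times\mathbb{R}^{dT})$ there exists $C<+\infty$ such that for all $l,N_l\in\mathbb{N}$, $$\int\left(\varphi(\theta,x^l_{1:T})\prod_{k=1}^T\check H_{k,\theta}(x^l_k,\tilde x^{l-1}_k)-\varphi(\theta,\tilde x^{l-1}_{1:T})\prod_{k=1}^T\check H_{k,\theta}(\tilde x^{l-1}_k,x^l_k)\right)^2\check\pi^{l,N_l}\big(d(\theta,x^l_{1:T},\tilde x^{l-1}_{1:T})\big)\le C\Delta_l.$$
   Context: Notation: $\mathbb{N}=\{1,2,\dots\}$, $\Delta_l=2^{-l}$; $\mathcal{C}_b^2\cap\mathcal{B}_b$ denotes bounded, twice continuously differentiable functions with bounded first and second derivatives. Model. Fix $d,d_\theta,T\in\mathbb{N}$, $\Theta\subseteq\mathbb{R}^{d_\theta}$, $x_0\in\mathbb{R}^d$, a measurable space $\mathsf{Y}$, observations $y_1,\dots,y_T\in\mathsf{Y}$. For each $\theta\in\Theta$: $a_\theta:\mathbb{R}^d\times\mathbb{R}\to\mathbb{R}^d$, $\xi_\theta:\mathbb{R}^{2d}\to\mathbb{R}$, $\sigma:\mathbb{R}^d\to\mathbb{R}^{d\times d}$, a positive bounded likelihood $G_\theta(x,y)$; $\nu$ a Lebesgue probability density on $\Theta$. (A1): $a_\theta$ (as a function on $\mathbb{R}^{d+1}$) and $\xi_\theta$ (on $\mathbb{R}^{2d}$) are in $\mathcal{C}_b^2\cap\mathcal{B}_b$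 with bounds uniform in $\theta$; $\sigma\in\mathcal{C}_b^2\cap\mathcal{B}_b$; $\sigma(x)\sigma(x)^\top$ positive definite for all $x$. (A2): for every $y$, $(\theta,x)\mapsto G_\theta(x,y)$ is in $\mathcal{C}_b^2(\Theta\times\mathbb{R}^d)\cap\mathcal{B}_b(\Theta\times\mathbb{R}^d)$ and $\inf_{\theta,x,y}G_\theta(x,y)>0$. Coupled particle-driven Euler scheme (level $l\in\mathbb{N}$, $N\in\mathbb{N}$, $\theta$ fixed). Let $W^1,\dots,W^N,B$ be independent standard $d$-dim Brownian motions. For step $h\in\{\Delta_l,\Delta_{l-1}\}$ define particles $X^{h,i}_0=x_0$, $X^{h,i}_{(k+1)h}=X^{h,i}_{kh}+a_\theta\big(X^{h,i}_{kh},\frac1N\sum_{j=1}^N\xi_\theta(X^{h,i}_{kh},X^{h,j}_{kh})\big)h+\sigma(X^{h,i}_{kh})(W^i_{(k+1)h}-W^i_{kh})$, $k=0,\dots,Th^{-1}-1$, with empirical measures $\mu^h_{kh}=\frac1N\sum_j\delta_{X^{h,j}_{kh}}$ (both levels use the same $W^i$). Then $Z^l$ (step $\Delta_l$) and $\tilde Z^{l-1}$ (step $\Delta_{l-1}$) are defined by $Z_0=x_0$, $Z_{(k+1)h}=Z_{kh}+a_\theta\big(Z_{kh},\int\xi_\theta(Z_{kh},x)\mu^h_{kh}(dx)\big)h+\sigma(Z_{kh})(B_{(k+1)h}-B_{kh})$, both driven by the same $B$. Let $H_{k,\theta}(x,x')=\frac12(G_\theta(x,y_k)+G_\theta(x',y_k))$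 and $\check H_{k,\theta}(x,x')=G_\theta(x,y_k)/H_{k,\theta}(x,x')$. The probability measure $\check\pi^{l,N}$ on $\Theta\times\mathbb{R}^{dT}\times\mathbb{R}^{dT}$ is defined by $\int f\,d\check\pi^{l,N}=\frac{\int_\Theta\nu(\theta)\mathbb{E}_\theta[f(\theta,Z^l_{1:T},\tilde Z^{l-1}_{1:T})\prod_{k=1}^TH_{k,\theta}(Z^l_k,\tilde Z^{l-1}_k)]d\theta}{\int_\Theta\nu(\theta)\mathbb{E}_\theta[\prod_{k=1}^TH_{k,\theta}(Z^l_k,\tilde Z^{l-1}_k)]d\theta}$, where $Z_{1:T}$ denotes the values at integer times $1,\dots,T$ and the expectation is over particles and $B$. *)

theory Defs
  imports "HOL-Probability.Probability"
begin

definition C2b_bd :: "'a::euclidean_space set \<Rightarrow> real \<Rightarrow> ('a \<Rightarrow> 'b::real_normed_vector) \<Rightarrow> bool" where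
  "C2b_bd S M f \<longleftrightarrow> (\<exists>(Df :: 'a \<Rightarrow> 'a \<Rightarrow>\<^sub>L 'b) (D2 :: 'a \<Rightarrow> 'a \<Rightarrow>\<^sub>L ('a \<Rightarrow>\<^sub>L 'b)).
      (\<forall>x\<in>S. (f has_derivative blinfun_apply (Df x)) (at x within S)) \<and>
      (\<forall>x\<in>S. (Df has_derivative blinfun_apply (D2 x)) (at x within S)) \<and>
      continuous_on S D2 \<and>
      (\<forall>x\<in>S. norm (f x) \<le> M \<and> norm (Df x) \<le> M \<and> norm (D2 x) \<le> M))"

definition C2b_on :: "'a::euclidean_space set \<Rightarrow> ('a \<Rightarrow> 'b::real_normed_vector) \<Rightarrow> bool" where
  "C2b_on S f \<longleftrightarrow> (\<exists>M. C2b_bd S M f)"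

definition Delta :: "nat \<Rightarrow> real" where
  "Delta l = (1/2) ^ l"

text \<open>Particle system with step h, drift a (parameter theta already fixed), interaction xi,
  diffusion sg, N particles (indices 0..N-1), Brownian increments dW i k over step k.\<close>
primrec particles :: "((real^'d) \<times> real \<Rightarrow> real^'d) \<Rightarrow> ((real^'d) \<times> (real^'d) \<Rightarrow> real) \<Rightarrow>
    (real^'d \<Rightarrow> real^'d^'d) \<Rightarrow> real^'d \<Rightarrow> nat \<Rightarrow> real \<Rightarrow> (nat \<Rightarrow> nat \<Rightarrow> real^'d) \<Rightarrow>
    nat \<Rightarrow> nat \<Rightarrow> real^'d" where
  "particles a xi sg x0 N h dW 0 = (\<lambda>i. x0)"
| "particles a xi sg x0 N h dW (Suc k) =
     (let X = particles a xi sg x0 N h dW k in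
      (\<lambda>i. X i + h *\<^sub>R a (X i, (\<Sum>j<N. xi (X i, X j)) / real N) + sg (X i) *v dW i k))"

primrec driven :: "((real^'d) \<times> real \<Rightarrow> real^'d) \<Rightarrow> ((real^'d) \<times> (real^'d) \<Rightarrow> real) \<Rightarrow>
    (real^'d \<Rightarrow> real^'d^'d) \<Rightarrow> real^'d \<Rightarrow> nat \<Rightarrow> real \<Rightarrow> (nat \<Rightarrow> nat \<Rightarrow> real^'d) \<Rightarrow>
    (nat \<Rightarrow> real^'d) \<Rightarrow> nat \<Rightarrow> real^'d" where
  "driven a xi sg x0 N h dW dB 0 = x0"
| "driven a xi sg x0 N h dW dB (Suc k) =
     (let z = driven a xi sg x0 N h dW dB k; X = particles a xi sg x0 N h dW k in
      z + h *\<^sub>R a (z, (\<Sum>j<N. xi (z, X j)) / real N) + sg z *v dB k)"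

text \<open>omega (i,k,c): standard Gaussian for Brownian motion i (i<N: W^(i+1); i=N: B),
  fine step k (of size Delta l), coordinate c.\<close>
definition noise_space :: "nat \<Rightarrow> nat \<Rightarrow> (nat \<times> nat \<times> 'd::finite \<Rightarrow> real) measure" where
  "noise_space n N = PiM ({..N} \<times> {..<n} \<times> UNIV) (\<lambda>_. density lborel std_normal_density)"

definition incr_f :: "nat \<Rightarrow> (nat \<times> nat \<times> 'd::finite \<Rightarrow> real) \<Rightarrow> nat \<Rightarrow> nat \<Rightarrow> real^'d" where
  "incr_f l \<omega> i k = (\<chi> c. sqrt (Delta l) * \<omega> (i, k, c))"

definition incr_c :: "nat \<Rightarrow> (nat \<times> nat \<times> 'd::finite \<Rightarrow> real) \<Rightarrow> nat \<Rightarrow> nat \<Rightarrow> real^'d" where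
  "incr_c l \<omega> i k = incr_f l \<omega> i (2*k) + incr_f l \<omega> i (2*k+1)"

text \<open>Values of (Z^l, tilde Z^{l-1}) at integer times; time tix t corresponds to index t.\<close>
definition coupled_pair ::
  "(real^'p \<Rightarrow> (real^'d) \<times> real \<Rightarrow> real^'d) \<Rightarrow> (real^'p \<Rightarrow> (real^'d) \<times> (real^'d) \<Rightarrow> real) \<Rightarrow>
   (real^'d \<Rightarrow> real^'d^'d) \<Rightarrow> real^'d \<Rightarrow> ('t::finite \<Rightarrow> nat) \<Rightarrow> nat \<Rightarrow> nat \<Rightarrow> real^'p \<Rightarrow>
   (nat \<times> nat \<times> 'd::finite \<Rightarrow> real) \<Rightarrow> (real^'d^'t) \<times> (real^'d^'t)" where
  "coupled_pair a xi sg x0 tix l N \<theta> \<omega> =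
    ((\<chi> t. driven (a \<theta>) (xi \<theta>) sg x0 N (Delta l) (incr_f l \<omega>) (incr_f l \<omega> N) (tix t * 2^l)),
     (\<chi> t. driven (a \<theta>) (xi \<theta>) sg x0 N (Delta (l-1)) (incr_c l \<omega>) (incr_c l \<omega> N) (tix t * 2^(l-1))))"

definition Hk :: "(real^'p \<Rightarrow> real^'d \<Rightarrow> 'y \<Rightarrow> real) \<Rightarrow> 'y \<Rightarrow> real^'p \<Rightarrow> real^'d \<Rightarrow> real^'d \<Rightarrow> real" where
  "Hk G yk \<theta> x x' = (G \<theta> x yk + G \<theta> x' yk) / 2"

definition Hchk :: "(real^'p \<Rightarrow> real^'d \<Rightarrow> 'y \<Rightarrow> real) \<Rightarrow> 'y \<Rightarrow> real^'p \<Rightarrow> real^'d \<Rightarrow> real^'d \<Rightarrow> real" where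
  "Hchk G yk \<theta> x x' = G \<theta> x yk / Hk G yk \<theta> x x'"

definition Hprod :: "(real^'p \<Rightarrow> real^'d \<Rightarrow> 'y \<Rightarrow> real) \<Rightarrow> (nat \<Rightarrow> 'y) \<Rightarrow> ('t::finite \<Rightarrow> nat) \<Rightarrow>
    real^'p \<Rightarrow> real^'d^'t \<Rightarrow> real^'d^'t \<Rightarrow> real" where
  "Hprod G y tix \<theta> x x' = (\<Prod>t\<in>UNIV. Hk G (y (tix t)) \<theta> (x $ t) (x' $ t))"

definition pi_unnorm ::
  "(real^'p) set \<Rightarrow> (real^'p \<Rightarrow> real) \<Rightarrow> (real^'p \<Rightarrow> (real^'d) \<times> real \<Rightarrow> real^'d) \<Rightarrow>
   (real^'p \<Rightarrow> (real^'d) \<times> (real^'d) \<Rightarrow> real) \<Rightarrow> (real^'d \<Rightarrow> real^'d^'d) \<Rightarrow> real^'d \<Rightarrow>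
   (real^'p \<Rightarrow> real^'d \<Rightarrow> 'y \<Rightarrow> real) \<Rightarrow> (nat \<Rightarrow> 'y) \<Rightarrow> ('t::finite \<Rightarrow> nat) \<Rightarrow> nat \<Rightarrow> nat \<Rightarrow>
   (real^'p \<Rightarrow> real^'d^'t \<Rightarrow> real^'d^'t \<Rightarrow> real) \<Rightarrow> real" where
  "pi_unnorm \<Theta> \<nu> a xi sg x0 G y tix l N f =
    (LINT \<theta>:\<Theta>|lborel. \<nu> \<theta> *
       (\<integral>\<omega>. (case coupled_pair a xi sg x0 tix l N \<theta> \<omega> of (x, x') \<Rightarrow>
                 f \<theta> x x' * Hprod G y tix \<theta> x x')
         \<partial>(noise_space (CARD('t) * 2^l) N :: (nat \<times> nat \<times> 'd \<Rightarrow> real) measure)))"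

text \<open>Integral of f against the probability measure check-pi^{l,N}.\<close>
definition check_pi ::
  "(real^'p) set \<Rightarrow> (real^'p \<Rightarrow> real) \<Rightarrow> (real^'p \<Rightarrow> (real^'d) \<times> real \<Rightarrow> real^'d) \<Rightarrow>
   (real^'p \<Rightarrow> (real^'d) \<times> (real^'d) \<Rightarrow> real) \<Rightarrow> (real^'d \<Rightarrow> real^'d^'d) \<Rightarrow> real^'d \<Rightarrow>
   (real^'p \<Rightarrow> real^'d \<Rightarrow> 'y \<Rightarrow> real) \<Rightarrow> (nat \<Rightarrow> 'y) \<Rightarrow> ('t::finite \<Rightarrow> nat) \<Rightarrow> nat \<Rightarrow> nat \<Rightarrow>
   (real^'p \<Rightarrow> real^'d^'t \<Rightarrow> real^'d^'t \<Rightarrow> real) \<Rightarrow> real" where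
  "check_pi \<Theta> \<nu> a xi sg x0 G y tix l N f =
     pi_unnorm \<Theta> \<nu> a xi sg x0 G y tix l N f / pi_unnorm \<Theta> \<nu> a xi sg x0 G y tix l N (\<lambda>_ _ _. 1)"

end

theory Submission
  imports Defs
begin

(*
  Write x and x' for the fine (step Delta l) and the coarse (step 2 Delta l) Euler paths, driven by
  the same Gaussian increments and by particle systems coupled in the same way.  Over one coarse step
  their difference changes by diffusion increments, which are centred and independent of the past,
  plus drift terms of size O(Delta l).  As the coefficients are bounded and Lipschitz, orthogonality
  of the increments and Young's inequality give, uniformly in the particle index and in N,
    E|x - x'|^2 (k + 1) <= (1 + C Delta l) E|x - x'|^2 (k) + C Delta l^2,
  and the discrete Gronwall lemma yields E|x - x'|^2 = O(Delta l) at the observation times.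

  Multiplied by the weight prod_k H_k, the integrand becomes (psi x - psi x')^2 / prod_k H_k with
  psi x = phi (theta, x) prod_k G (x_k), a Lipschitz function.  Since prod_k H_k >= g^T for the lower
  bound g of G, the integrand is at most L |x - x'|^2, and the normalising constant of the coupled
  posterior is at least g^T; both bounds are uniform in theta, l and N.
*)

section \<open>Independent coordinates of a product probability space\<close>

lemma borel_measurable_PiM_coordinate:
  assumes "sets M = sets borel"
  shows "(\<lambda>\<omega>. \<omega> i) \<in> borel_measurable (PiM I (\<lambda>_. M))"
proof (cases "i \<in> I")
  case True
  then have "(\<lambda>\<omega>. \<omega> i) \<in> measurable (PiM I (\<lambda>_. M)) M"
    by (rule measurable_component_singleton)
  then show ?thesis
    by (simp add: measurable_cong_sets[OF refl assms])
next
  case False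
  have "(\<lambda>\<omega>. undefined) \<in> borel_measurable (PiM I (\<lambda>_. M))" by simp
  moreover have "\<omega> \<in> space (PiM I (\<lambda>_. M)) \<Longrightarrow> undefined = \<omega> i" for \<omega>
    using False by (auto simp: space_PiM PiE_def extensional_def)
  ultimately show ?thesis
    by (rule measurable_cong[THEN iffD1, rotated])
qed

lemma
  fixes g :: "real \<Rightarrow> real"
  assumes M: "prob_space M" and i: "i \<in> I"
  shows integrable_PiM_coordinate: "integrable M g \<Longrightarrow> integrable (PiM I (\<lambda>_. M)) (\<lambda>\<omega>. g (\<omega> i))"
    and integral_PiM_coordinate:
      "g \<in> borel_measurable M \<Longrightarrow> (\<integral>\<omega>. g (\<omega> i) \<partial>PiM I (\<lambda>_. M)) = (\<integral>x. g x \<partial>M)"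
proof -
  have coord: "(\<lambda>\<omega>. \<omega> i) \<in> measurable (PiM I (\<lambda>_. M)) M"
    using i by (rule measurable_component_singleton)
  have distr: "distr (PiM I (\<lambda>_. M)) M (\<lambda>\<omega>. \<omega> i) = M"
    using M i by (rule distr_PiM_component)
  show "integrable (PiM I (\<lambda>_. M)) (\<lambda>\<omega>. g (\<omega> i))" if "integrable M g"
    using integrable_distr_eq[OF coord borel_measurable_integrable[OF that]] that
    by (simp add: distr)
  show "(\<integral>\<omega>. g (\<omega> i) \<partial>PiM I (\<lambda>_. M)) = (\<integral>x. g x \<partial>M)" if "g \<in> borel_measurable M"
    using integral_distr[OF coord that] by (simp add: distr)
qed

lemma indep_vars_PiM_coordinates:
  assumes M: "prob_space M" and I: "I \<noteq> {}"
  shows "prob_space.indep_vars (PiM I (\<lambda>_. M)) (\<lambda>_. M) (\<lambda>i \<omega>. \<omega> i) I"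
proof -
  interpret P: prob_space "PiM I (\<lambda>_. M)" using M by (rule prob_space_PiM)
  have "distr (PiM I (\<lambda>_. M)) (PiM I (\<lambda>_. M)) (\<lambda>\<omega>. \<lambda>i\<in>I. \<omega> i) =
        distr (PiM I (\<lambda>_. M)) (PiM I (\<lambda>_. M)) (\<lambda>\<omega>. \<omega>)"
    by (intro distr_cong) (auto simp: space_PiM PiE_def extensional_def restrict_def fun_eq_iff)
  also have "\<dots> = PiM I (\<lambda>_. M)" by (rule distr_id)
  also have "\<dots> = PiM I (\<lambda>i. distr (PiM I (\<lambda>_. M)) M (\<lambda>\<omega>. \<omega> i))"
    using M by (intro PiM_cong refl distr_PiM_component[symmetric]) auto
  finally show ?thesis
    using I by (subst P.indep_vars_iff_distr_eq_PiM') auto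
qed

definition depends_only_on :: "('i \<Rightarrow> 'a) set \<Rightarrow> 'i set \<Rightarrow> (('i \<Rightarrow> 'a) \<Rightarrow> 'b) \<Rightarrow> bool" where
  "depends_only_on S A f \<longleftrightarrow> (\<forall>\<omega>\<in>S. \<forall>\<omega>'\<in>S. (\<forall>i\<in>A. \<omega> i = \<omega>' i) \<longrightarrow> f \<omega> = f \<omega>')"

lemma depends_only_on_comp: "depends_only_on S A f \<Longrightarrow> depends_only_on S A (\<lambda>\<omega>. H (f \<omega>))"
  unfolding depends_only_on_def by metis

lemma depends_only_on_comp2:
  "depends_only_on S A f \<Longrightarrow> depends_only_on S A g \<Longrightarrow> depends_only_on S A (\<lambda>\<omega>. H (f \<omega>) (g \<omega>))"
  unfolding depends_only_on_def by metis

lemma depends_only_on_mono: "depends_only_on S A f \<Longrightarrow> A \<subseteq> B \<Longrightarrow> depends_only_on S B f"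
  unfolding depends_only_on_def by blast

lemma depends_only_on_factor_restrict:
  assumes f: "f \<in> borel_measurable (PiM I (\<lambda>_. M))" "depends_only_on (space (PiM I (\<lambda>_. M))) A f"
    and A: "A \<subseteq> I" and c: "c \<in> space M"
  obtains f' where "f' \<in> borel_measurable (PiM A (\<lambda>_. M))"
    and "\<And>\<omega>. \<omega> \<in> space (PiM I (\<lambda>_. M)) \<Longrightarrow> f \<omega> = f' (restrict \<omega> A)"
proof
  define pad where "pad \<omega> = (\<lambda>i. if i \<in> A then \<omega> i else if i \<in> I then c else undefined)" for \<omega>
  have "pad \<in> measurable (PiM A (\<lambda>_. M)) (PiM I (\<lambda>_. M))"
    unfolding pad_def
  proof (rule measurable_PiM_single')
    fix i assume "i \<in> I"
    then show "(\<lambda>\<omega>. if i \<in> A then \<omega> i else if i \<in> I then c else undefined) \<in> measurable (PiM A (\<lambda>_. M)) M"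
      using c by (cases "i \<in> A") auto
  qed (use A c in \<open>auto simp: PiE_def extensional_def space_PiM\<close>)
  then show "f \<circ> pad \<in> borel_measurable (PiM A (\<lambda>_. M))"
    using f(1) by (rule measurable_comp)
  fix \<omega> assume \<omega>: "\<omega> \<in> space (PiM I (\<lambda>_. M))"
  have "pad (restrict \<omega> A) \<in> space (PiM I (\<lambda>_. M))"
    using \<omega> c A unfolding pad_def space_PiM PiE_iff by (auto simp: extensional_def)
  moreover have "\<forall>i\<in>A. \<omega> i = pad (restrict \<omega> A) i"
    by (simp add: pad_def)
  ultimately show "f \<omega> = (f \<circ> pad) (restrict \<omega> A)"
    using f(2)[unfolded depends_only_on_def, rule_format, OF \<omega>] by simp
qed

lemma integral_mult_disjoint_coordinates:
  fixes f g :: "('i \<Rightarrow> 'a) \<Rightarrow> real"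
  assumes M: "prob_space M" and I: "I \<noteq> {}" and AI: "A \<subseteq> I" and BI: "B \<subseteq> I" and AB: "A \<inter> B = {}"
    and fm: "f \<in> borel_measurable (PiM I (\<lambda>_. M))" and gm: "g \<in> borel_measurable (PiM I (\<lambda>_. M))"
    and fd: "depends_only_on (space (PiM I (\<lambda>_. M))) A f"
    and gd: "depends_only_on (space (PiM I (\<lambda>_. M))) B g"
    and fi: "integrable (PiM I (\<lambda>_. M)) f" and gi: "integrable (PiM I (\<lambda>_. M)) g"
  shows "(\<integral>\<omega>. f \<omega> * g \<omega> \<partial>PiM I (\<lambda>_. M)) = (\<integral>\<omega>. f \<omega> \<partial>PiM I (\<lambda>_. M)) * (\<integral>\<omega>. g \<omega> \<partial>PiM I (\<lambda>_. M))"
    and "integrable (PiM I (\<lambda>_. M)) (\<lambda>\<omega>. f \<omega> * g \<omega>)"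
proof -
  let ?M = "PiM I (\<lambda>_. M)"
  interpret P: prob_space ?M using M by (rule prob_space_PiM)
  obtain c where c: "c \<in> space M"
    using M prob_space.not_empty by blast
  obtain f' where f': "f' \<in> borel_measurable (PiM A (\<lambda>_. M))" "\<And>\<omega>. \<omega> \<in> space ?M \<Longrightarrow> f \<omega> = f' (restrict \<omega> A)"
    using depends_only_on_factor_restrict[OF fm fd AI c] by blast
  obtain g' where g': "g' \<in> borel_measurable (PiM B (\<lambda>_. M))" "\<And>\<omega>. \<omega> \<in> space ?M \<Longrightarrow> g \<omega> = g' (restrict \<omega> B)"
    using depends_only_on_factor_restrict[OF gm gd BI c] by blast
  let ?F = "f' \<circ> (\<lambda>\<omega>. restrict \<omega> A)" and ?G = "g' \<circ> (\<lambda>\<omega>. restrict \<omega> B)"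
  have F: "?F \<omega> = f \<omega>" and G: "?G \<omega> = g \<omega>" if "\<omega> \<in> space ?M" for \<omega>
    using f'(2)[OF that] g'(2)[OF that] by simp_all
  have "P.indep_var (PiM A (\<lambda>_. M)) (\<lambda>\<omega>. restrict \<omega> A) (PiM B (\<lambda>_. M)) (\<lambda>\<omega>. restrict \<omega> B)"
    by (rule P.indep_var_restrict[OF indep_vars_PiM_coordinates[OF M I] AB AI BI])
  then have indep: "P.indep_var borel ?F borel ?G"
    by (rule P.indep_var_compose[OF _ f'(1) g'(1)])
  have Fi: "integrable ?M ?F"
    by (rule Bochner_Integration.integrable_cong[THEN iffD2, OF refl F fi])
  have Gi: "integrable ?M ?G"
    by (rule Bochner_Integration.integrable_cong[THEN iffD2, OF refl G gi])
  have "(\<integral>\<omega>. f \<omega> * g \<omega> \<partial>?M) = (\<integral>\<omega>. ?F \<omega> * ?G \<omega> \<partial>?M)"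
    by (rule Bochner_Integration.integral_cong) (simp_all only: F G)
  also have "\<dots> = (\<integral>\<omega>. ?F \<omega> \<partial>?M) * (\<integral>\<omega>. ?G \<omega> \<partial>?M)"
    by (rule P.indep_var_lebesgue_integral[OF indep Fi Gi])
  also have "\<dots> = (\<integral>\<omega>. f \<omega> \<partial>?M) * (\<integral>\<omega>. g \<omega> \<partial>?M)"
    by (intro arg_cong2[where f = "(*)"] Bochner_Integration.integral_cong) (simp_all only: F G)
  finally show "(\<integral>\<omega>. f \<omega> * g \<omega> \<partial>?M) = (\<integral>\<omega>. f \<omega> \<partial>?M) * (\<integral>\<omega>. g \<omega> \<partial>?M)" .
  have "integrable ?M (\<lambda>\<omega>. ?F \<omega> * ?G \<omega>)"
    by (rule P.indep_var_integrable[OF indep Fi Gi])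
  then show "integrable ?M (\<lambda>\<omega>. f \<omega> * g \<omega>)"
    by (rule Bochner_Integration.integrable_cong[THEN iffD1, OF refl, rotated]) (simp only: F G)
qed

section \<open>Gaussian noise\<close>

abbreviation std_normal :: "real measure" where
  "std_normal \<equiv> density lborel std_normal_density"

lemma prob_space_std_normal: "prob_space std_normal"
  by (rule prob_space_normal_density) simp

lemma integrable_std_normal_power: "integrable std_normal (\<lambda>x. x ^ k)"
  by (subst integrable_density) (auto simp: integrable_std_normal_moment)

lemma integral_std_normal_id: "(\<integral>x. x \<partial>std_normal) = 0"
  using integral_std_normal_moment_odd[of 0] by (subst integral_density) auto

lemma integral_std_normal_square: "(\<integral>x. x\<^sup>2 \<partial>std_normal) = 1"
  using integral_std_normal_moment_even[of 1] by (subst integral_density) auto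

definition noise_index :: "nat \<Rightarrow> nat \<Rightarrow> (nat \<times> nat \<times> 'd::finite) set" where
  "noise_index n N = {..N} \<times> {..<n} \<times> UNIV"

lemma noise_space_eq_PiM: "noise_space n N = PiM (noise_index n N) (\<lambda>_. std_normal)"
  unfolding noise_space_def noise_index_def ..

definition sq_integrable :: "'a measure \<Rightarrow> ('a \<Rightarrow> 'b::real_normed_vector) \<Rightarrow> bool" where
  "sq_integrable M f \<longleftrightarrow> f \<in> borel_measurable M \<and> integrable M (\<lambda>\<omega>. (norm (f \<omega>))\<^sup>2)"

lemma sq_integrableD:
  "sq_integrable M f \<Longrightarrow> f \<in> borel_measurable M"
  "sq_integrable M f \<Longrightarrow> integrable M (\<lambda>\<omega>. (norm (f \<omega>))\<^sup>2)"
  by (auto simp: sq_integrable_def)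

lemma power2_norm_add_le:
  fixes p q :: "'a::real_normed_vector"
  assumes t: "0 < t"
  shows "(norm (p + q))\<^sup>2 \<le> (1 + t) * (norm p)\<^sup>2 + (1 + 1/t) * (norm q)\<^sup>2"
proof -
  have "0 \<le> (t * norm p - norm q)\<^sup>2 / t" using t by simp
  also have "\<dots> = t * (norm p)\<^sup>2 - 2 * norm p * norm q + (norm q)\<^sup>2 / t"
    using t by (simp add: power2_eq_square field_simps)
  finally have cross: "2 * norm p * norm q \<le> t * (norm p)\<^sup>2 + (norm q)\<^sup>2 / t" by simp
  have "(norm (p + q))\<^sup>2 \<le> (norm p + norm q)\<^sup>2"
    by (intro power_mono norm_triangle_ineq) simp
  also have "\<dots> \<le> (1 + t) * (norm p)\<^sup>2 + (1 + 1/t) * (norm q)\<^sup>2"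
    using cross by (simp add: power2_sum algebra_simps)
  finally show ?thesis .
qed

lemma power2_norm_add_le_2:
  fixes p q :: "'a::real_normed_vector"
  shows "(norm (p + q))\<^sup>2 \<le> 2 * (norm p)\<^sup>2 + 2 * (norm q)\<^sup>2"
  using power2_norm_add_le[of 1 p q] by simp

lemma sq_integrable_bound:
  fixes f :: "'a \<Rightarrow> 'b::real_normed_vector" and g :: "'a \<Rightarrow> 'c::real_normed_vector"
  assumes f: "f \<in> borel_measurable M" and g: "sq_integrable M g"
    and le: "\<And>\<omega>. \<omega> \<in> space M \<Longrightarrow> norm (f \<omega>) \<le> c * norm (g \<omega>)"
  shows "sq_integrable M f"
  unfolding sq_integrable_def
proof
  show "integrable M (\<lambda>\<omega>. (norm (f \<omega>))\<^sup>2)"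
  proof (rule Bochner_Integration.integrable_bound)
    show "integrable M (\<lambda>\<omega>. c\<^sup>2 * (norm (g \<omega>))\<^sup>2)" using sq_integrableD(2)[OF g] by simp
    show "(\<lambda>\<omega>. (norm (f \<omega>))\<^sup>2) \<in> borel_measurable M" using f by measurable
    show "AE \<omega> in M. norm ((norm (f \<omega>))\<^sup>2) \<le> norm (c\<^sup>2 * (norm (g \<omega>))\<^sup>2)"
    proof (rule AE_I2)
      fix \<omega> assume "\<omega> \<in> space M"
      then have "norm (f \<omega>) \<le> \<bar>c\<bar> * norm (g \<omega>)"
        using le by (meson abs_ge_self mult_right_mono norm_ge_zero order_trans)
      then have "(norm (f \<omega>))\<^sup>2 \<le> (\<bar>c\<bar> * norm (g \<omega>))\<^sup>2" by (intro power_mono) auto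
      then show "norm ((norm (f \<omega>))\<^sup>2) \<le> norm (c\<^sup>2 * (norm (g \<omega>))\<^sup>2)"
        by (simp add: power_mult_distrib)
    qed
  qed
qed fact

lemma (in prob_space) sq_integrable_const: "sq_integrable M (\<lambda>_. c)"
  unfolding sq_integrable_def by simp

lemma (in prob_space) sq_integrable_bounded:
  fixes f :: "'a \<Rightarrow> 'b::real_normed_vector"
  assumes "f \<in> borel_measurable M" "\<And>\<omega>. \<omega> \<in> space M \<Longrightarrow> norm (f \<omega>) \<le> c"
  shows "sq_integrable M f"
  using assms by (intro sq_integrable_bound[OF _ sq_integrable_const[of "1::real"]]) auto

lemma sq_integrable_add:
  fixes f g :: "'a \<Rightarrow> 'b::euclidean_space"
  assumes f: "sq_integrable M f" and g: "sq_integrable M g"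
  shows "sq_integrable M (\<lambda>\<omega>. f \<omega> + g \<omega>)"
  unfolding sq_integrable_def
proof
  show m: "(\<lambda>\<omega>. f \<omega> + g \<omega>) \<in> borel_measurable M"
    using f g by (auto simp: sq_integrable_def)
  show "integrable M (\<lambda>\<omega>. (norm (f \<omega> + g \<omega>))\<^sup>2)"
  proof (rule Bochner_Integration.integrable_bound)
    show "integrable M (\<lambda>\<omega>. 2 * (norm (f \<omega>))\<^sup>2 + 2 * (norm (g \<omega>))\<^sup>2)"
      using f g by (simp add: sq_integrable_def)
    show "(\<lambda>\<omega>. (norm (f \<omega> + g \<omega>))\<^sup>2) \<in> borel_measurable M" using m by measurable
  qed (auto intro!: AE_I2 simp: power2_norm_add_le_2)
qed

lemma sq_integrable_scaleR:
  fixes f :: "'a \<Rightarrow> 'b::euclidean_space"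
  shows "sq_integrable M f \<Longrightarrow> sq_integrable M (\<lambda>\<omega>. c *\<^sub>R f \<omega>)"
  unfolding sq_integrable_def by (auto simp: power_mult_distrib)

lemma sq_integrable_diff:
  fixes f g :: "'a \<Rightarrow> 'b::euclidean_space"
  assumes "sq_integrable M f" "sq_integrable M g"
  shows "sq_integrable M (\<lambda>\<omega>. f \<omega> - g \<omega>)"
  using sq_integrable_add[OF assms(1) sq_integrable_scaleR[OF assms(2), of "-1"]] by simp

lemma sq_integrable_norm:
  fixes f :: "'a \<Rightarrow> 'b::euclidean_space"
  shows "sq_integrable M f \<Longrightarrow> sq_integrable M (\<lambda>\<omega>. norm (f \<omega>))"
  unfolding sq_integrable_def by auto

lemma integrable_inner_sq_integrable:
  fixes f g :: "'a \<Rightarrow> 'b::euclidean_space"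
  assumes "sq_integrable M f" "sq_integrable M g"
  shows "integrable M (\<lambda>\<omega>. f \<omega> \<bullet> g \<omega>)"
proof (rule Bochner_Integration.integrable_bound)
  show "integrable M (\<lambda>\<omega>. (norm (f \<omega>))\<^sup>2 + (norm (g \<omega>))\<^sup>2)"
    using assms by (simp add: sq_integrable_def)
  show "(\<lambda>\<omega>. f \<omega> \<bullet> g \<omega>) \<in> borel_measurable M"
    using assms by (auto simp: sq_integrable_def)
  show "AE \<omega> in M. norm (f \<omega> \<bullet> g \<omega>) \<le> norm ((norm (f \<omega>))\<^sup>2 + (norm (g \<omega>))\<^sup>2)"
  proof (rule AE_I2)
    fix \<omega>
    have "\<bar>f \<omega> \<bullet> g \<omega>\<bar> \<le> norm (f \<omega>) * norm (g \<omega>)" by (rule Cauchy_Schwarz_ineq2)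
    also have "\<dots> \<le> (norm (f \<omega>))\<^sup>2 + (norm (g \<omega>))\<^sup>2"
      using sum_squares_bound[of "norm (f \<omega>)" "norm (g \<omega>)"]
        mult_nonneg_nonneg[OF norm_ge_zero norm_ge_zero, of "f \<omega>" "g \<omega>"] by linarith
    finally show "norm (f \<omega> \<bullet> g \<omega>) \<le> norm ((norm (f \<omega>))\<^sup>2 + (norm (g \<omega>))\<^sup>2)" by simp
  qed
qed

lemma (in prob_space) integrable_norm_sq_integrable:
  fixes f :: "'a \<Rightarrow> 'b::euclidean_space"
  assumes "sq_integrable M f"
  shows "integrable M (\<lambda>\<omega>. norm (f \<omega>))"
  using integrable_inner_sq_integrable[OF sq_integrable_norm[OF assms] sq_integrable_const[of "1::real"]]
  by simp

lemma integral_power2_norm_add_le: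
  fixes p q :: "'a \<Rightarrow> 'b::euclidean_space"
  assumes p: "sq_integrable M p" and q: "sq_integrable M q" and t: "0 < t"
  shows "(\<integral>\<omega>. (norm (p \<omega> + q \<omega>))\<^sup>2 \<partial>M) \<le>
           (1 + t) * (\<integral>\<omega>. (norm (p \<omega>))\<^sup>2 \<partial>M) + (1 + 1/t) * (\<integral>\<omega>. (norm (q \<omega>))\<^sup>2 \<partial>M)"
proof -
  have "(\<integral>\<omega>. (norm (p \<omega> + q \<omega>))\<^sup>2 \<partial>M) \<le> (\<integral>\<omega>. (1 + t) * (norm (p \<omega>))\<^sup>2 + (1 + 1/t) * (norm (q \<omega>))\<^sup>2 \<partial>M)"
    using sq_integrableD(2)[OF sq_integrable_add[OF p q]] sq_integrableD(2)[OF p] sq_integrableD(2)[OF q]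
    by (intro integral_mono power2_norm_add_le[OF t]) auto
  then show ?thesis
    using sq_integrableD(2)[OF p] sq_integrableD(2)[OF q] by simp
qed

lemma power2_norm_vec: "(norm (v::'a::real_inner^'n::finite))\<^sup>2 = (\<Sum>r\<in>UNIV. (norm (v $ r))\<^sup>2)"
  unfolding power2_norm_eq_inner inner_vec_def ..

lemma norm_matrix_vector_mult_le: "norm ((A::real^'n::finite^'m::finite) *v x) \<le> norm A * norm x"
proof -
  have "(norm (A *v x))\<^sup>2 = (\<Sum>r\<in>UNIV. (A $ r \<bullet> x)\<^sup>2)"
    by (simp add: power2_norm_vec matrix_vector_mult_def inner_vec_def)
  also have "\<dots> \<le> (\<Sum>r\<in>UNIV. (norm (A $ r) * norm x)\<^sup>2)"
  proof (rule sum_mono)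
    fix r
    show "(A $ r \<bullet> x)\<^sup>2 \<le> (norm (A $ r) * norm x)\<^sup>2"
      using Cauchy_Schwarz_ineq2[of "A $ r" x] by (metis abs_ge_zero power2_abs power_mono)
  qed
  also have "\<dots> = (norm A * norm x)\<^sup>2"
    by (simp add: power2_norm_vec[of A] power_mult_distrib sum_distrib_right)
  finally show ?thesis
    by (meson mult_nonneg_nonneg norm_ge_zero power2_le_imp_le)
qed

lemma borel_measurable_vec:
  fixes f :: "'c::finite \<Rightarrow> 'a \<Rightarrow> real"
  assumes "\<And>c. f c \<in> borel_measurable M"
  shows "(\<lambda>\<omega>. \<chi> c. f c \<omega>) \<in> borel_measurable M"
proof (subst borel_measurable_euclidean_space, intro ballI)
  fix b :: "real^'c" assume "b \<in> Basis"
  then obtain c where b: "b = axis c 1" unfolding Basis_vec_def by auto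
  show "(\<lambda>\<omega>. (\<chi> c. f c \<omega>) \<bullet> b) \<in> borel_measurable M"
    unfolding b inner_axis using assms by simp
qed

lemma borel_measurable_vec_nth:
  "(f::'a \<Rightarrow> 'b::real_normed_vector^'c::finite) \<in> borel_measurable M \<Longrightarrow> (\<lambda>\<omega>. f \<omega> $ c) \<in> borel_measurable M"
  by (rule borel_measurable_continuous_on[of "\<lambda>x. x $ c"]) (auto intro: continuous_intros)

lemma borel_measurable_matrix_vector_mult:
  fixes A :: "'a \<Rightarrow> real^'d::finite^'e::finite" and x :: "'a \<Rightarrow> real^'d"
  assumes "A \<in> borel_measurable M" "x \<in> borel_measurable M"
  shows "(\<lambda>\<omega>. A \<omega> *v x \<omega>) \<in> borel_measurable M"
  unfolding matrix_vector_mult_def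
  by (intro borel_measurable_vec borel_measurable_sum borel_measurable_times borel_measurable_vec_nth assms)

lemma abs_matrix_entry_le_norm: "\<bar>(A::real^'n::finite^'m::finite) $ r $ c\<bar> \<le> norm A"
  using component_le_norm_cart[of "A $ r" c] Finite_Cartesian_Product.norm_nth_le order_trans by blast

lemma continuous_on_Lipschitz_bound:
  fixes f :: "'a::real_normed_vector \<Rightarrow> 'b::real_normed_vector"
  assumes "\<And>x y. norm (f x - f y) \<le> L * norm (x - y)"
  shows "continuous_on UNIV f"
proof -
  have "(\<bar>L\<bar> + 1)-lipschitz_on UNIV f"
  proof (rule lipschitz_onI)
    fix x y :: 'a
    have "norm (f x - f y) \<le> L * norm (x - y)" by (rule assms)
    also have "\<dots> \<le> (\<bar>L\<bar> + 1) * norm (x - y)" by (intro mult_right_mono) auto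
    finally show "dist (f x) (f y) \<le> (\<bar>L\<bar> + 1) * dist x y" by (simp add: dist_norm)
  qed simp
  then show ?thesis by (rule lipschitz_on_continuous_on)
qed

lemma borel_measurable_continuous_on_Pair:
  fixes f :: "'b::second_countable_topology \<times> 'c::second_countable_topology \<Rightarrow> 'e::second_countable_topology"
  assumes "continuous_on UNIV f" "u \<in> borel_measurable M" "v \<in> borel_measurable M"
  shows "(\<lambda>\<omega>. f (u \<omega>, v \<omega>)) \<in> borel_measurable M"
  by (rule borel_measurable_continuous_on[OF assms(1)]) (intro borel_measurable_Pair assms(2,3))

section \<open>The particle-driven Euler scheme\<close>

definition interaction_mean ::
    "((real^'d) \<times> (real^'d) \<Rightarrow> real) \<Rightarrow> nat \<Rightarrow> (nat \<Rightarrow> real^'d) \<Rightarrow> real^'d \<Rightarrow> real" where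
  "interaction_mean xi N X u = (\<Sum>j<N. xi (u, X j)) / real N"

definition euler_step :: "((real^'d) \<times> real \<Rightarrow> real^'d) \<Rightarrow> ((real^'d) \<times> (real^'d) \<Rightarrow> real) \<Rightarrow>
    (real^'d \<Rightarrow> real^'d^'d) \<Rightarrow> nat \<Rightarrow> real \<Rightarrow> (nat \<Rightarrow> real^'d) \<Rightarrow> real^'d \<Rightarrow> real^'d \<Rightarrow> real^'d" where
  "euler_step a xi sg N h X u \<beta> = u + h *\<^sub>R a (u, interaction_mean xi N X u) + sg u *v \<beta>"

text \<open>The particles occupy the indices below N; index N carries the driven process, which uses the
  increments dW N and does not enter the empirical measure.\<close>
definition euler_system :: "((real^'d) \<times> real \<Rightarrow> real^'d) \<Rightarrow> ((real^'d) \<times> (real^'d) \<Rightarrow> real) \<Rightarrow>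
    (real^'d \<Rightarrow> real^'d^'d) \<Rightarrow> real^'d \<Rightarrow> nat \<Rightarrow> real \<Rightarrow> (nat \<Rightarrow> nat \<Rightarrow> real^'d) \<Rightarrow>
    nat \<Rightarrow> nat \<Rightarrow> real^'d" where
  "euler_system a xi sg x0 N h dW k i =
     (if i < N then particles a xi sg x0 N h dW k i else driven a xi sg x0 N h dW (dW N) k)"

lemma euler_system_0: "euler_system a xi sg x0 N h dW 0 i = x0"
  by (simp add: euler_system_def)

lemma euler_system_Suc:
  assumes "i \<le> N"
  shows "euler_system a xi sg x0 N h dW (Suc k) i =
    euler_step a xi sg N h (euler_system a xi sg x0 N h dW k) (euler_system a xi sg x0 N h dW k i) (dW i k)"
proof -
  have "(\<Sum>j<N. xi (u, particles a xi sg x0 N h dW k j)) = (\<Sum>j<N. xi (u, euler_system a xi sg x0 N h dW k j))" for u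
    by (intro sum.cong) (auto simp: euler_system_def)
  then show ?thesis
    using assms by (auto simp: euler_system_def euler_step_def interaction_mean_def Let_def)
qed

lemma euler_system_cong:
  assumes "\<And>j k'. j \<le> N \<Longrightarrow> k' < k \<Longrightarrow> dW j k' = dW' j k'" and "i \<le> N"
  shows "euler_system a xi sg x0 N h dW k i = euler_system a xi sg x0 N h dW' k i"
  using assms
proof (induction k arbitrary: i)
  case 0
  then show ?case by (simp add: euler_system_0)
next
  case (Suc k)
  have IH: "euler_system a xi sg x0 N h dW k j = euler_system a xi sg x0 N h dW' k j" if "j \<le> N" for j
    using Suc.IH Suc.prems(1) that by simp
  have "interaction_mean xi N (euler_system a xi sg x0 N h dW k) u =
        interaction_mean xi N (euler_system a xi sg x0 N h dW' k) u" for u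
    unfolding interaction_mean_def by (intro arg_cong[where f="\<lambda>s. s / real N"] sum.cong) (auto simp: IH)
  then show ?case
    using Suc.prems by (simp add: euler_system_Suc euler_step_def IH)
qed

lemma borel_measurable_euler_system:
  assumes ca: "continuous_on UNIV a" and cx: "continuous_on UNIV xi" and cs: "continuous_on UNIV sg"
    and dW: "\<And>i k. (\<lambda>\<omega>. dW \<omega> i k) \<in> borel_measurable M" and i: "i \<le> N"
  shows "(\<lambda>\<omega>. euler_system a xi sg x0 N h (dW \<omega>) k i) \<in> borel_measurable M"
  using i
proof (induction k arbitrary: i)
  case 0
  then show ?case by (simp add: euler_system_0)
next
  case (Suc k)
  have "(\<lambda>\<omega>. interaction_mean xi N (euler_system a xi sg x0 N h (dW \<omega>) k)
                (euler_system a xi sg x0 N h (dW \<omega>) k i)) \<in> borel_measurable M"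
    unfolding interaction_mean_def using Suc
    by (intro borel_measurable_divide borel_measurable_sum borel_measurable_continuous_on_Pair[OF cx]) auto
  then show ?case
    unfolding euler_system_Suc[OF Suc.prems] euler_step_def
    by (intro borel_measurable_add borel_measurable_scaleR borel_measurable_continuous_on_Pair[OF ca]
        borel_measurable_matrix_vector_mult borel_measurable_continuous_on[OF cs] Suc.IH Suc.prems dW
        borel_measurable_const)
qed

lemma euler_step_two_steps_diff:
  assumes "v = euler_step a xi sg N h X u \<beta>1"
  shows "euler_step a xi sg N h Y v \<beta>2 - euler_step a xi sg N (2 * h) W w (\<beta>1 + \<beta>2) =
    ((u - w) + (sg u - sg w) *v \<beta>1 + (sg v - sg w) *v \<beta>2) +
    (h *\<^sub>R (a (u, interaction_mean xi N X u) - a (w, interaction_mean xi N W w)) +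
     h *\<^sub>R (a (v, interaction_mean xi N Y v) - a (w, interaction_mean xi N W w)))"
  using assms
  by (simp add: euler_step_def matrix_vector_right_distrib matrix_vector_mult_diff_rdistrib
      scaleR_diff_right scaleR_add_left[of h h, symmetric] algebra_simps)

lemma Delta_pred: "1 \<le> l \<Longrightarrow> Delta (l - 1) = 2 * Delta l"
  unfolding Delta_def by (cases l) auto

lemma Delta_mult_power_pred: "1 \<le> l \<Longrightarrow> Delta l * 2 ^ (l - 1) = 1 / 2"
  unfolding Delta_def by (cases l) (auto simp: power_divide)

text \<open>This is the constant 1 + 4 Z (3 + c) delivered by mse_recursion_arith for
  Z = K^2 (d + 2 + 4 K^2) and c = 4 K^2 (1 + d).\<close>
definition euler_mse_const :: "real \<Rightarrow> nat \<Rightarrow> real" where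
  "euler_mse_const K d = 1 + 4 * (K\<^sup>2 * (d + 2 + 4 * K\<^sup>2)) * (3 + 4 * K\<^sup>2 * (1 + d))"

lemma mse_recursion_arith:
  fixes h b Z c P Q D :: real
  assumes h: "0 < h" "h \<le> 1" and nonneg: "0 \<le> b" "0 \<le> Z" "0 \<le> c"
    and P: "P \<le> b + h * Z * (3 * b + c * h)" and Q: "Q \<le> h\<^sup>2 * Z * (3 * b + c * h)"
    and D: "D \<le> (1 + h) * P + (1 + 1/h) * Q"
  shows "D \<le> (1 + (1 + 4 * Z * (3 + c)) * h) * b + (1 + 4 * Z * (3 + c)) * h\<^sup>2"
proof -
  let ?X = "3 * b + c * h"
  have X: "0 \<le> h * Z * ?X" using h nonneg by simp
  have "(1 + h) * P \<le> (1 + h) * (b + h * Z * ?X)" and "(1 + 1/h) * Q \<le> (1 + 1/h) * (h\<^sup>2 * Z * ?X)"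
    using P Q h by (auto intro!: mult_left_mono)
  then have "D \<le> (1 + h) * (b + h * Z * ?X) + (1 + 1/h) * (h\<^sup>2 * Z * ?X)"
    using D by linarith
  also have "\<dots> = (1 + h) * b + 2 * (1 + h) * (h * Z * ?X)"
    using h by (simp add: field_simps power2_eq_square)
  also have "\<dots> \<le> (1 + h) * b + 4 * (h * Z * ?X)"
    using h X by (intro add_left_mono) (simp add: mult_right_mono)
  also have "\<dots> = b + (1 + 12 * Z) * h * b + 4 * Z * c * h\<^sup>2"
    by (simp add: algebra_simps power2_eq_square)
  also have "\<dots> \<le> (1 + (1 + 4 * Z * (3 + c)) * h) * b + (1 + 4 * Z * (3 + c)) * h\<^sup>2"
    using h nonneg by (simp add: algebra_simps mult_nonneg_nonneg)
  finally show ?thesis .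
qed

lemma discrete_Gronwall:
  fixes e :: "nat \<Rightarrow> 'i \<Rightarrow> real"
  assumes C: "0 \<le> C" and h: "0 < h"
    and e0: "\<And>i. i \<in> J \<Longrightarrow> e 0 i \<le> 0"
    and step: "\<And>k b i. k < n \<Longrightarrow> 0 \<le> b \<Longrightarrow> (\<And>j. j \<in> J \<Longrightarrow> e k j \<le> b) \<Longrightarrow> i \<in> J \<Longrightarrow>
                 e (Suc k) i \<le> (1 + C * h) * b + C * h\<^sup>2"
    and k: "k \<le> n" and i: "i \<in> J" and T: "h * k \<le> T"
  shows "e k i \<le> C * T * exp (C * T) * h"
proof -
  have q: "1 \<le> 1 + C * h" using C h by simp
  have power_bound: "e k i \<le> C * h\<^sup>2 * k * (1 + C * h) ^ k" if "k \<le> n" "i \<in> J" for k i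
    using that
  proof (induction k arbitrary: i)
    case 0
    then show ?case using e0 by simp
  next
    case (Suc k)
    have "e (Suc k) i \<le> (1 + C * h) * (C * h\<^sup>2 * k * (1 + C * h) ^ k) + C * h\<^sup>2"
      using Suc C q by (intro step) auto
    also have "\<dots> = C * h\<^sup>2 * (k * (1 + C * h) ^ Suc k + 1)"
      by (simp add: algebra_simps)
    also have "\<dots> \<le> C * h\<^sup>2 * (k * (1 + C * h) ^ Suc k + (1 + C * h) ^ Suc k)"
      using C q by (intro mult_left_mono add_left_mono one_le_power) auto
    also have "\<dots> = C * h\<^sup>2 * Suc k * (1 + C * h) ^ Suc k"
      by (simp add: algebra_simps)
    finally show ?case .
  qed
  have "(1 + C * h) ^ k \<le> exp (C * h) ^ k"
    using C h by (intro power_mono) (auto simp: exp_ge_add_one_self add.commute)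
  also have "\<dots> = exp (C * (h * k))"
    by (simp add: exp_of_nat_mult[symmetric] mult_ac)
  also have "\<dots> \<le> exp (C * T)"
    using C T by (simp add: mult_left_mono)
  finally have growth: "(1 + C * h) ^ k \<le> exp (C * T)" .
  have "0 \<le> T" using h T by (meson mult_nonneg_nonneg of_nat_0_le_iff order_trans less_imp_le)
  then have "(C * h) * (h * k) * (1 + C * h) ^ k \<le> (C * h) * T * exp (C * T)"
    using C h T growth by (intro mult_mono) auto
  then show ?thesis
    using power_bound[OF k i] by (simp add: power2_eq_square mult_ac)
qed

section \<open>Coupling of the fine and the coarse scheme\<close>

text \<open>The noise provides the increments of n fine time steps.\<close>
locale coupled_euler =
  fixes a :: "(real^'d::finite) \<times> real \<Rightarrow> real^'d" and xi :: "(real^'d) \<times> (real^'d) \<Rightarrow> real"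
    and sg :: "real^'d \<Rightarrow> real^'d^'d" and x0 :: "real^'d" and N l n :: nat and K :: real
  assumes N_pos: "1 \<le> N"
    and a_bounded: "\<And>z. norm (a z) \<le> K" and a_Lipschitz: "\<And>z z'. norm (a z - a z') \<le> K * norm (z - z')"
    and xi_Lipschitz: "\<And>z z'. \<bar>xi z - xi z'\<bar> \<le> K * norm (z - z')"
    and sg_bounded: "\<And>x. norm (sg x) \<le> K" and sg_Lipschitz: "\<And>x x'. norm (sg x - sg x') \<le> K * norm (x - x')"
begin

abbreviation mu :: "(nat \<times> nat \<times> 'd \<Rightarrow> real) measure" where
  "mu \<equiv> PiM (noise_index n N) (\<lambda>_. std_normal)"

abbreviation h :: real where
  "h \<equiv> Delta l"

definition fine_path :: "(nat \<times> nat \<times> 'd \<Rightarrow> real) \<Rightarrow> nat \<Rightarrow> nat \<Rightarrow> real^'d" where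
  "fine_path \<omega> k i = euler_system a xi sg x0 N h (incr_f l \<omega>) k i"

definition coarse_path :: "(nat \<times> nat \<times> 'd \<Rightarrow> real) \<Rightarrow> nat \<Rightarrow> nat \<Rightarrow> real^'d" where
  "coarse_path \<omega> k i = euler_system a xi sg x0 N (2 * h) (incr_c l \<omega>) k i"

definition noise_before :: "nat \<Rightarrow> (nat \<times> nat \<times> 'd) set" where
  "noise_before m = {x \<in> noise_index n N. fst (snd x) < m}"

definition noise_at :: "nat \<Rightarrow> nat \<Rightarrow> (nat \<times> nat \<times> 'd) set" where
  "noise_at i m = {x \<in> noise_index n N. fst x = i \<and> fst (snd x) = m}"

sublocale P: prob_space mu
  by (intro prob_space_PiM prob_space_std_normal)

lemma K_nonneg: "0 \<le> K"
  using a_bounded norm_ge_zero order_trans by blast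

lemma h_pos: "0 < h" and h_le_1: "h \<le> 1"
  unfolding Delta_def by (simp_all add: power_le_one)

lemma continuous_coefficients:
  "continuous_on UNIV a" "continuous_on UNIV xi" "continuous_on UNIV sg"
  using continuous_on_Lipschitz_bound[OF a_Lipschitz] continuous_on_Lipschitz_bound[of xi K]
    continuous_on_Lipschitz_bound[OF sg_Lipschitz] xi_Lipschitz by auto

lemma borel_measurable_incr_f: "(\<lambda>\<omega>. incr_f l \<omega> i k) \<in> borel_measurable mu"
  unfolding incr_f_def
  by (intro borel_measurable_vec borel_measurable_times borel_measurable_const borel_measurable_PiM_coordinate) simp

lemma borel_measurable_incr_c: "(\<lambda>\<omega>. incr_c l \<omega> i k) \<in> borel_measurable mu"
  unfolding incr_c_def by (intro borel_measurable_add borel_measurable_incr_f)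

lemma borel_measurable_fine_path: "i \<le> N \<Longrightarrow> (\<lambda>\<omega>. fine_path \<omega> k i) \<in> borel_measurable mu"
  unfolding fine_path_def by (rule borel_measurable_euler_system[OF continuous_coefficients borel_measurable_incr_f])

lemma borel_measurable_coarse_path: "i \<le> N \<Longrightarrow> (\<lambda>\<omega>. coarse_path \<omega> k i) \<in> borel_measurable mu"
  unfolding coarse_path_def by (rule borel_measurable_euler_system[OF continuous_coefficients borel_measurable_incr_c])

lemma fine_path_0: "fine_path \<omega> 0 i = x0" and coarse_path_0: "coarse_path \<omega> 0 i = x0"
  unfolding fine_path_def coarse_path_def by (simp_all add: euler_system_0)

lemma fine_path_Suc:
  "i \<le> N \<Longrightarrow> fine_path \<omega> (Suc k) i = euler_step a xi sg N h (fine_path \<omega> k) (fine_path \<omega> k i) (incr_f l \<omega> i k)"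
  unfolding fine_path_def by (subst euler_system_Suc) (simp_all add: eta_contract_eq)

lemma coarse_path_Suc:
  "i \<le> N \<Longrightarrow> coarse_path \<omega> (Suc k) i = euler_step a xi sg N (2 * h) (coarse_path \<omega> k) (coarse_path \<omega> k i) (incr_c l \<omega> i k)"
  unfolding coarse_path_def by (subst euler_system_Suc) (simp_all add: eta_contract_eq)

lemma noise_index_mem: "i \<le> N \<Longrightarrow> m < n \<Longrightarrow> (i, m, c) \<in> noise_index n N"
  by (simp add: noise_index_def)

lemma noise_before_subset: "noise_before m \<subseteq> noise_index n N"
  and noise_at_subset: "noise_at i m \<subseteq> noise_index n N"
  and noise_before_noise_at_disjoint: "noise_before m \<inter> noise_at i m = {}"
  and noise_at_subset_noise_before: "noise_at i m \<subseteq> noise_before (Suc m)"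
  by (auto simp: noise_before_def noise_at_def)

lemma noise_before_mono: "m \<le> m' \<Longrightarrow> noise_before m \<subseteq> noise_before m'"
  by (auto simp: noise_before_def)

lemma outside_noise_index: "\<omega> \<in> space mu \<Longrightarrow> x \<notin> noise_index n N \<Longrightarrow> \<omega> x = undefined"
  unfolding space_PiM PiE_def extensional_def by blast

lemma incr_f_depends_only_on: "depends_only_on (space mu) (noise_at i m) (\<lambda>\<omega>. incr_f l \<omega> i m)"
  unfolding depends_only_on_def
proof (intro ballI impI)
  fix \<omega> \<omega>' assume w: "\<omega> \<in> space mu" "\<omega>' \<in> space mu" and agree: "\<forall>x\<in>noise_at i m. \<omega> x = \<omega>' x"
  have "\<omega> (i, m, c) = \<omega>' (i, m, c)" for c
    using agree outside_noise_index[OF w(1)] outside_noise_index[OF w(2)]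
    by (cases "(i, m, c) \<in> noise_index n N") (auto simp: noise_at_def)
  then show "incr_f l \<omega> i m = incr_f l \<omega>' i m"
    by (simp add: incr_f_def)
qed

lemma increments_agree_before:
  assumes w: "\<omega> \<in> space mu" "\<omega>' \<in> space mu" and agree: "\<forall>x\<in>noise_before m. \<omega> x = \<omega>' x" and "k < m"
  shows "\<omega> (i, k, c) = \<omega>' (i, k, c)"
  using assms outside_noise_index[OF w(1)] outside_noise_index[OF w(2)]
  by (cases "(i, k, c) \<in> noise_index n N") (auto simp: noise_before_def)

lemma fine_path_depends_only_on:
  assumes i: "i \<le> N"
  shows "depends_only_on (space mu) (noise_before k) (\<lambda>\<omega>. fine_path \<omega> k i)"
  unfolding depends_only_on_def fine_path_def
proof (intro ballI impI)
  fix \<omega> \<omega>' assume w: "\<omega> \<in> space mu" "\<omega>' \<in> space mu" and agree: "\<forall>x\<in>noise_before k. \<omega> x = \<omega>' x"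
  show "euler_system a xi sg x0 N h (incr_f l \<omega>) k i = euler_system a xi sg x0 N h (incr_f l \<omega>') k i"
    by (rule euler_system_cong[OF _ i]) (simp add: incr_f_def increments_agree_before[OF w agree])
qed

lemma coarse_path_depends_only_on:
  assumes i: "i \<le> N"
  shows "depends_only_on (space mu) (noise_before (2 * k)) (\<lambda>\<omega>. coarse_path \<omega> k i)"
  unfolding depends_only_on_def coarse_path_def
proof (intro ballI impI)
  fix \<omega> \<omega>' assume w: "\<omega> \<in> space mu" "\<omega>' \<in> space mu" and agree: "\<forall>x\<in>noise_before (2 * k). \<omega> x = \<omega>' x"
  show "euler_system a xi sg x0 N (2 * h) (incr_c l \<omega>) k i = euler_system a xi sg x0 N (2 * h) (incr_c l \<omega>') k i"
    by (rule euler_system_cong[OF _ i]) (simp add: incr_c_def incr_f_def increments_agree_before[OF w agree])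
qed

lemma
  assumes "i \<le> N" "m < n"
  shows integrable_noise_coordinate: "integrable mu (\<lambda>\<omega>. \<omega> (i, m, c))"
    and integral_noise_coordinate: "(\<integral>\<omega>. \<omega> (i, m, c) \<partial>mu) = 0"
    and integrable_noise_coordinate_sq: "integrable mu (\<lambda>\<omega>. (\<omega> (i, m, c))\<^sup>2)"
    and integral_noise_coordinate_sq: "(\<integral>\<omega>. (\<omega> (i, m, c))\<^sup>2 \<partial>mu) = 1"
proof -
  note coordinate = noise_index_mem[OF assms, of c]
  show "integrable mu (\<lambda>\<omega>. \<omega> (i, m, c))"
    using integrable_PiM_coordinate[OF prob_space_std_normal coordinate integrable_std_normal_power[of 1]]
    by simp
  show "integrable mu (\<lambda>\<omega>. (\<omega> (i, m, c))\<^sup>2)"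
    by (rule integrable_PiM_coordinate[OF prob_space_std_normal coordinate integrable_std_normal_power])
  show "(\<integral>\<omega>. \<omega> (i, m, c) \<partial>mu) = 0"
    using integral_PiM_coordinate[OF prob_space_std_normal coordinate, of "\<lambda>x. x"] integral_std_normal_id
    by simp
  show "(\<integral>\<omega>. (\<omega> (i, m, c))\<^sup>2 \<partial>mu) = 1"
    using integral_PiM_coordinate[OF prob_space_std_normal coordinate, of "\<lambda>x. x\<^sup>2"] integral_std_normal_square
    by simp
qed

lemma norm_incr_f_sq: "(norm (incr_f l \<omega> i k))\<^sup>2 = h * (\<Sum>c\<in>UNIV. (\<omega> (i, k, c))\<^sup>2)"
  unfolding incr_f_def power2_norm_vec using h_pos
  by (simp add: sum_distrib_left power_mult_distrib)

lemma
  assumes "i \<le> N" "k < n"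
  shows sq_integrable_incr_f: "sq_integrable mu (\<lambda>\<omega>. incr_f l \<omega> i k)"
    and integral_norm_incr_f_sq: "(\<integral>\<omega>. (norm (incr_f l \<omega> i k))\<^sup>2 \<partial>mu) = h * CARD('d)"
  using integrable_noise_coordinate_sq[OF assms] integral_noise_coordinate_sq[OF assms]
    borel_measurable_incr_f
  by (simp_all add: sq_integrable_def norm_incr_f_sq Bochner_Integration.integral_sum)

text \<open>The increment over step m is centred and independent of everything before step m.\<close>
lemma integral_inner_increment_eq_0:
  fixes F :: "_ \<Rightarrow> real^'d" and G :: "_ \<Rightarrow> real^'d^'d"
  assumes i: "i \<le> N" and m: "m < n"
    and F: "sq_integrable mu F" "depends_only_on (space mu) (noise_before m) F"
    and G: "G \<in> borel_measurable mu" "\<And>\<omega>. \<omega> \<in> space mu \<Longrightarrow> norm (G \<omega>) \<le> B"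
      "depends_only_on (space mu) (noise_before m) G"
  shows "(\<integral>\<omega>. F \<omega> \<bullet> (G \<omega> *v incr_f l \<omega> i m) \<partial>mu) = 0"
proof -
  have expand: "F \<omega> \<bullet> (G \<omega> *v incr_f l \<omega> i m) =
      (\<Sum>r\<in>UNIV. \<Sum>c\<in>UNIV. (F \<omega> $ r * G \<omega> $ r $ c) * (sqrt h * \<omega> (i, m, c)))" for \<omega>
    by (simp add: inner_vec_def matrix_vector_mult_def incr_f_def sum_distrib_left mult_ac)
  have FG_meas: "(\<lambda>\<omega>. F \<omega> $ r * G \<omega> $ r $ c) \<in> borel_measurable mu" for r c
    using F(1) G(1) by (intro borel_measurable_times borel_measurable_vec_nth) (auto simp: sq_integrable_def)
  have FG_int: "integrable mu (\<lambda>\<omega>. F \<omega> $ r * G \<omega> $ r $ c)" for r c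
  proof (rule Bochner_Integration.integrable_bound)
    show "integrable mu (\<lambda>\<omega>. B * norm (F \<omega>))" using P.integrable_norm_sq_integrable[OF F(1)] by simp
    show "AE \<omega> in mu. norm (F \<omega> $ r * G \<omega> $ r $ c) \<le> norm (B * norm (F \<omega>))"
    proof (rule AE_I2)
      fix \<omega> assume w: "\<omega> \<in> space mu"
      have "\<bar>F \<omega> $ r\<bar> * \<bar>G \<omega> $ r $ c\<bar> \<le> norm (F \<omega>) * B"
        using component_le_norm_cart[of "F \<omega>" r] order_trans[OF abs_matrix_entry_le_norm G(2)[OF w]]
        by (intro mult_mono) auto
      moreover have "0 \<le> B" using G(2)[OF w] norm_ge_zero order_trans by blast
      ultimately show "norm (F \<omega> $ r * G \<omega> $ r $ c) \<le> norm (B * norm (F \<omega>))"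
        by (simp add: abs_mult mult.commute)
    qed
  qed (rule FG_meas)
  have "depends_only_on (space mu) (noise_at i m) (\<lambda>\<omega>. incr_f l \<omega> i m $ c)" for c
    by (rule depends_only_on_comp[OF incr_f_depends_only_on])
  then have noise_dep: "depends_only_on (space mu) (noise_at i m) (\<lambda>\<omega>. sqrt h * \<omega> (i, m, c))" for c
    by (simp add: incr_f_def)
  note factor = integral_mult_disjoint_coordinates[OF prob_space_std_normal _
      noise_before_subset noise_at_subset noise_before_noise_at_disjoint FG_meas _
      depends_only_on_comp2[OF F(2) G(3)] noise_dep FG_int]
  have noise_int: "integrable mu (\<lambda>\<omega>. sqrt h * \<omega> (i, m, c))" for c
    using integrable_noise_coordinate[OF i m] by simp
  have ne: "noise_index n N \<noteq> {}" using noise_index_mem[OF i m] by blast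
  have noise_meas: "(\<lambda>\<omega>. sqrt h * \<omega> (i, m, c)) \<in> borel_measurable mu" for c
    by (intro borel_measurable_times borel_measurable_const borel_measurable_PiM_coordinate) simp
  show ?thesis
    unfolding expand using factor[OF ne noise_meas noise_int]
    by (simp add: Bochner_Integration.integral_sum integral_noise_coordinate[OF i m])
qed

lemma
  fixes G :: "_ \<Rightarrow> real^'d^'d"
  assumes i: "i \<le> N" and m: "m < n"
    and G: "G \<in> borel_measurable mu" "\<And>\<omega>. \<omega> \<in> space mu \<Longrightarrow> norm (G \<omega>) \<le> B"
      "depends_only_on (space mu) (noise_before m) G"
  shows sq_integrable_increment: "sq_integrable mu (\<lambda>\<omega>. G \<omega> *v incr_f l \<omega> i m)"
    and integral_norm_increment_sq_le:
      "(\<integral>\<omega>. (norm (G \<omega> *v incr_f l \<omega> i m))\<^sup>2 \<partial>mu) \<le> h * CARD('d) * (\<integral>\<omega>. (norm (G \<omega>))\<^sup>2 \<partial>mu)"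
proof -
  have G_sq: "sq_integrable mu G" using G(1,2) by (rule P.sq_integrable_bounded)
  note factor = integral_mult_disjoint_coordinates[OF prob_space_std_normal _
      noise_before_subset noise_at_subset noise_before_noise_at_disjoint _ _
      depends_only_on_comp[OF G(3)] depends_only_on_comp[OF incr_f_depends_only_on]
      sq_integrableD(2)[OF G_sq] sq_integrableD(2)[OF sq_integrable_incr_f[OF i m]]]
  have ne: "noise_index n N \<noteq> {}" using noise_index_mem[OF i m] by blast
  have prod: "integrable mu (\<lambda>\<omega>. (norm (G \<omega>))\<^sup>2 * (norm (incr_f l \<omega> i m))\<^sup>2)"
   and E_prod: "(\<integral>\<omega>. (norm (G \<omega>))\<^sup>2 * (norm (incr_f l \<omega> i m))\<^sup>2 \<partial>mu) =
        (\<integral>\<omega>. (norm (G \<omega>))\<^sup>2 \<partial>mu) * (h * CARD('d))"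
    using factor[OF ne] G(1) borel_measurable_incr_f integral_norm_incr_f_sq[OF i m] by simp_all
  have pointwise: "(norm (G \<omega> *v incr_f l \<omega> i m))\<^sup>2 \<le> (norm (G \<omega>))\<^sup>2 * (norm (incr_f l \<omega> i m))\<^sup>2" for \<omega>
    by (metis norm_ge_zero norm_matrix_vector_mult_le power_mono power_mult_distrib)
  have meas: "(\<lambda>\<omega>. G \<omega> *v incr_f l \<omega> i m) \<in> borel_measurable mu"
    by (intro borel_measurable_matrix_vector_mult G(1) borel_measurable_incr_f)
  show sq: "sq_integrable mu (\<lambda>\<omega>. G \<omega> *v incr_f l \<omega> i m)"
    unfolding sq_integrable_def
    by (rule conjI[OF meas Bochner_Integration.integrable_bound[OF prod]]) (use meas pointwise in auto)
  show "(\<integral>\<omega>. (norm (G \<omega> *v incr_f l \<omega> i m))\<^sup>2 \<partial>mu) \<le> h * CARD('d) * (\<integral>\<omega>. (norm (G \<omega>))\<^sup>2 \<partial>mu)"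
    using integral_mono[OF sq_integrableD(2)[OF sq] prod pointwise] E_prod by (simp add: mult.commute)
qed

lemma integral_norm_add_increment_sq:
  fixes F :: "_ \<Rightarrow> real^'d" and G :: "_ \<Rightarrow> real^'d^'d"
  assumes i: "i \<le> N" and m: "m < n"
    and F: "sq_integrable mu F" "depends_only_on (space mu) (noise_before m) F"
    and G: "G \<in> borel_measurable mu" "\<And>\<omega>. \<omega> \<in> space mu \<Longrightarrow> norm (G \<omega>) \<le> B"
      "depends_only_on (space mu) (noise_before m) G"
  shows "(\<integral>\<omega>. (norm (F \<omega> + G \<omega> *v incr_f l \<omega> i m))\<^sup>2 \<partial>mu) =
         (\<integral>\<omega>. (norm (F \<omega>))\<^sup>2 \<partial>mu) + (\<integral>\<omega>. (norm (G \<omega> *v incr_f l \<omega> i m))\<^sup>2 \<partial>mu)"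
proof -
  note T = sq_integrable_increment[OF i m G]
  have "(norm (F \<omega> + G \<omega> *v incr_f l \<omega> i m))\<^sup>2 =
        (norm (F \<omega>))\<^sup>2 + (norm (G \<omega> *v incr_f l \<omega> i m))\<^sup>2 + 2 * (F \<omega> \<bullet> (G \<omega> *v incr_f l \<omega> i m))" for \<omega>
    by (simp add: power2_norm_eq_inner inner_add_left inner_add_right inner_commute)
  then show ?thesis
    using sq_integrableD(2)[OF F(1)] sq_integrableD(2)[OF T] integrable_inner_sq_integrable[OF F(1) T]
      integral_inner_increment_eq_0[OF i m F G]
    by simp
qed

lemma sq_integrable_euler_step:
  assumes s: "0 \<le> s" and u: "sq_integrable mu u" and \<beta>: "sq_integrable mu \<beta>"
    and meas: "(\<lambda>\<omega>. euler_step a xi sg N s (X \<omega>) (u \<omega>) (\<beta> \<omega>)) \<in> borel_measurable mu"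
  shows "sq_integrable mu (\<lambda>\<omega>. euler_step a xi sg N s (X \<omega>) (u \<omega>) (\<beta> \<omega>))"
proof (rule sq_integrable_bound[OF meas, of "\<lambda>\<omega>. norm (u \<omega>) + s * K + K * norm (\<beta> \<omega>)" 1])
  show "sq_integrable mu (\<lambda>\<omega>. norm (u \<omega>) + s * K + K * norm (\<beta> \<omega>))"
    using sq_integrable_scaleR[OF sq_integrable_norm[OF \<beta>], of K]
    by (intro sq_integrable_add sq_integrable_norm u P.sq_integrable_const) simp_all
  fix \<omega>
  let ?A = "s *\<^sub>R a (u \<omega>, interaction_mean xi N (X \<omega>) (u \<omega>))" and ?B = "sg (u \<omega>) *v \<beta> \<omega>"
  have "norm ?A \<le> s * K"
    using s a_bounded by (simp add: mult_left_mono)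
  moreover have "norm ?B \<le> K * norm (\<beta> \<omega>)"
    using norm_matrix_vector_mult_le sg_bounded by (meson mult_right_mono norm_ge_zero order_trans)
  moreover have "0 \<le> s * K + K * norm (\<beta> \<omega>)"
    using s K_nonneg by simp
  ultimately show "norm (euler_step a xi sg N s (X \<omega>) (u \<omega>) (\<beta> \<omega>)) \<le> 1 * norm (norm (u \<omega>) + s * K + K * norm (\<beta> \<omega>))"
    unfolding euler_step_def using norm_triangle_ineq[of "u \<omega> + ?A" ?B] norm_triangle_ineq[of "u \<omega>" ?A]
    by simp
qed

lemma sq_integrable_fine_path: "k \<le> n \<Longrightarrow> i \<le> N \<Longrightarrow> sq_integrable mu (\<lambda>\<omega>. fine_path \<omega> k i)"
proof (induction k arbitrary: i)
  case 0
  then show ?case by (simp add: fine_path_0 P.sq_integrable_const)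
next
  case (Suc k)
  have "sq_integrable mu (\<lambda>\<omega>. euler_step a xi sg N h (fine_path \<omega> k) (fine_path \<omega> k i) (incr_f l \<omega> i k))"
    using Suc borel_measurable_fine_path[OF Suc.prems(2), of "Suc k"] h_pos
    by (intro sq_integrable_euler_step sq_integrable_incr_f) (auto simp: fine_path_Suc)
  then show ?case by (simp add: fine_path_Suc[OF Suc.prems(2)])
qed

lemma sq_integrable_coarse_path: "2 * k \<le> n \<Longrightarrow> i \<le> N \<Longrightarrow> sq_integrable mu (\<lambda>\<omega>. coarse_path \<omega> k i)"
proof (induction k arbitrary: i)
  case 0
  then show ?case by (simp add: coarse_path_0 P.sq_integrable_const)
next
  case (Suc k)
  have "sq_integrable mu (\<lambda>\<omega>. incr_c l \<omega> i k)"
    unfolding incr_c_def using Suc.prems by (intro sq_integrable_add sq_integrable_incr_f) auto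
  then have "sq_integrable mu (\<lambda>\<omega>. euler_step a xi sg N (2 * h) (coarse_path \<omega> k) (coarse_path \<omega> k i) (incr_c l \<omega> i k))"
    using Suc borel_measurable_coarse_path[OF Suc.prems(2), of "Suc k"] h_pos
    by (intro sq_integrable_euler_step) (auto simp: coarse_path_Suc)
  then show ?case by (simp add: coarse_path_Suc[OF Suc.prems(2)])
qed

lemma sq_integrable_path_diff:
  "k \<le> n \<Longrightarrow> 2 * k' \<le> n \<Longrightarrow> i \<le> N \<Longrightarrow> sq_integrable mu (\<lambda>\<omega>. fine_path \<omega> k i - coarse_path \<omega> k' i)"
  by (intro sq_integrable_diff sq_integrable_fine_path sq_integrable_coarse_path)

lemma interaction_mean_diff_sq_le:
  "(interaction_mean xi N X x - interaction_mean xi N Y y)\<^sup>2 \<le>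
     K\<^sup>2 * (norm (x - y))\<^sup>2 + K\<^sup>2 * ((\<Sum>j<N. (norm (X j - Y j))\<^sup>2) / N)"
proof -
  define d where "d j = xi (x, X j) - xi (y, Y j)" for j
  have N: "0 < real N" using N_pos by simp
  have "(interaction_mean xi N X x - interaction_mean xi N Y y)\<^sup>2 = (\<Sum>j<N. d j)\<^sup>2 / (real N)\<^sup>2"
    unfolding interaction_mean_def d_def by (simp add: sum_subtractf power_divide flip: diff_divide_distrib)
  also have "\<dots> \<le> (\<Sum>j<N. (d j)\<^sup>2) / real N"
    using sum_squared_le_sum_of_squares[of d "{..<N}"] N by (simp add: divide_simps power2_eq_square)
  also have "\<dots> \<le> (\<Sum>j<N. K\<^sup>2 * (norm (x - y))\<^sup>2 + K\<^sup>2 * (norm (X j - Y j))\<^sup>2) / real N"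
  proof (intro divide_right_mono sum_mono)
    fix j
    have "(d j)\<^sup>2 \<le> (K * norm ((x, X j) - (y, Y j)))\<^sup>2"
      unfolding d_def using xi_Lipschitz by (metis abs_ge_zero power2_abs power_mono)
    then show "(d j)\<^sup>2 \<le> K\<^sup>2 * (norm (x - y))\<^sup>2 + K\<^sup>2 * (norm (X j - Y j))\<^sup>2"
      by (simp add: power_mult_distrib norm_Pair algebra_simps)
  qed simp
  also have "\<dots> = K\<^sup>2 * (norm (x - y))\<^sup>2 + K\<^sup>2 * ((\<Sum>j<N. (norm (X j - Y j))\<^sup>2) / N)"
    using N by (simp add: sum.distrib sum_distrib_left[symmetric] field_simps)
  finally show ?thesis .
qed

lemma drift_diff_sq_le:
  "(norm (a (x, interaction_mean xi N X x) - a (y, interaction_mean xi N Y y)))\<^sup>2 \<le>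
     K\<^sup>2 * (1 + K\<^sup>2) * (norm (x - y))\<^sup>2 + K\<^sup>2 * K\<^sup>2 * ((\<Sum>j<N. (norm (X j - Y j))\<^sup>2) / N)"
proof -
  have "(norm (a (x, interaction_mean xi N X x) - a (y, interaction_mean xi N Y y)))\<^sup>2
      \<le> (K * norm ((x, interaction_mean xi N X x) - (y, interaction_mean xi N Y y)))\<^sup>2"
    by (intro power_mono a_Lipschitz) simp
  also have "\<dots> = K\<^sup>2 * ((norm (x - y))\<^sup>2 + (interaction_mean xi N X x - interaction_mean xi N Y y)\<^sup>2)"
    by (simp add: power_mult_distrib norm_Pair)
  also have "\<dots> \<le> K\<^sup>2 * ((norm (x - y))\<^sup>2 + (K\<^sup>2 * (norm (x - y))\<^sup>2 + K\<^sup>2 * ((\<Sum>j<N. (norm (X j - Y j))\<^sup>2) / N)))"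
    by (intro mult_left_mono add_left_mono interaction_mean_diff_sq_le) simp
  finally show ?thesis
    by (simp add: algebra_simps)
qed

lemma integral_drift_diff_sq_le:
  assumes X: "\<And>j. j < N \<Longrightarrow> sq_integrable mu (\<lambda>\<omega>. X \<omega> j)" and Y: "\<And>j. j < N \<Longrightarrow> sq_integrable mu (\<lambda>\<omega>. Y \<omega> j)"
    and x: "sq_integrable mu x" and y: "sq_integrable mu y"
    and xy: "(\<integral>\<omega>. (norm (x \<omega> - y \<omega>))\<^sup>2 \<partial>mu) \<le> b"
    and XY: "\<And>j. j < N \<Longrightarrow> (\<integral>\<omega>. (norm (X \<omega> j - Y \<omega> j))\<^sup>2 \<partial>mu) \<le> b"
  defines "A \<equiv> \<lambda>\<omega>. a (x \<omega>, interaction_mean xi N (X \<omega>) (x \<omega>)) - a (y \<omega>, interaction_mean xi N (Y \<omega>) (y \<omega>))"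
  shows "sq_integrable mu A" and "(\<integral>\<omega>. (norm (A \<omega>))\<^sup>2 \<partial>mu) \<le> K\<^sup>2 * (1 + 2 * K\<^sup>2) * b"
proof -
  have N: "0 < real N" using N_pos by simp
  define S where "S \<omega> = (\<Sum>j<N. (norm (X \<omega> j - Y \<omega> j))\<^sup>2) / N" for \<omega>
  have XY_sq: "j < N \<Longrightarrow> sq_integrable mu (\<lambda>\<omega>. X \<omega> j - Y \<omega> j)" for j
    using X Y by (rule sq_integrable_diff)
  have S_int: "integrable mu S"
    unfolding S_def using sq_integrableD(2)[OF XY_sq]
    by (intro integrable_divide Bochner_Integration.integrable_sum) auto
  have ES: "(\<integral>\<omega>. S \<omega> \<partial>mu) \<le> b"
  proof -
    have "(\<integral>\<omega>. S \<omega> \<partial>mu) = (\<Sum>j<N. (\<integral>\<omega>. (norm (X \<omega> j - Y \<omega> j))\<^sup>2 \<partial>mu)) / N"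
      unfolding S_def using sq_integrableD(2)[OF XY_sq] by (simp add: Bochner_Integration.integral_sum)
    also have "\<dots> \<le> (\<Sum>j<N. b) / N"
      using N XY by (intro divide_right_mono sum_mono) auto
    finally show ?thesis using N by simp
  qed
  have xy_sq: "integrable mu (\<lambda>\<omega>. (norm (x \<omega> - y \<omega>))\<^sup>2)"
    using sq_integrableD(2)[OF sq_integrable_diff[OF x y]] .
  have meas: "A \<in> borel_measurable mu"
    unfolding A_def interaction_mean_def using X Y x y
    by (intro borel_measurable_diff borel_measurable_continuous_on_Pair[OF continuous_coefficients(1)]
        borel_measurable_divide borel_measurable_sum borel_measurable_continuous_on_Pair[OF continuous_coefficients(2)])
      (auto simp: sq_integrable_def)
  have "norm (A \<omega>) \<le> 2 * K" for \<omega>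
    unfolding A_def using norm_triangle_ineq4 a_bounded by (smt (verit))
  with meas show "sq_integrable mu A"
    by (rule P.sq_integrable_bounded)
  have "(\<integral>\<omega>. (norm (A \<omega>))\<^sup>2 \<partial>mu) \<le> (\<integral>\<omega>. K\<^sup>2 * (1 + K\<^sup>2) * (norm (x \<omega> - y \<omega>))\<^sup>2 + K\<^sup>2 * K\<^sup>2 * S \<omega> \<partial>mu)"
  proof (rule integral_mono)
    show "integrable mu (\<lambda>\<omega>. (norm (A \<omega>))\<^sup>2)"
      using sq_integrableD(2)[OF \<open>sq_integrable mu A\<close>] .
    show "integrable mu (\<lambda>\<omega>. K\<^sup>2 * (1 + K\<^sup>2) * (norm (x \<omega> - y \<omega>))\<^sup>2 + K\<^sup>2 * K\<^sup>2 * S \<omega>)"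
      using xy_sq S_int by simp
    show "(norm (A \<omega>))\<^sup>2 \<le> K\<^sup>2 * (1 + K\<^sup>2) * (norm (x \<omega> - y \<omega>))\<^sup>2 + K\<^sup>2 * K\<^sup>2 * S \<omega>" for \<omega>
      unfolding A_def S_def by (rule drift_diff_sq_le)
  qed
  also have "\<dots> = K\<^sup>2 * (1 + K\<^sup>2) * (\<integral>\<omega>. (norm (x \<omega> - y \<omega>))\<^sup>2 \<partial>mu) + K\<^sup>2 * K\<^sup>2 * (\<integral>\<omega>. S \<omega> \<partial>mu)"
    using xy_sq S_int by simp
  also have "\<dots> \<le> K\<^sup>2 * (1 + K\<^sup>2) * b + K\<^sup>2 * K\<^sup>2 * b"
    using xy ES by (intro add_mono mult_left_mono) auto
  finally show "(\<integral>\<omega>. (norm (A \<omega>))\<^sup>2 \<partial>mu) \<le> K\<^sup>2 * (1 + 2 * K\<^sup>2) * b"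
    by (simp add: algebra_simps)
qed

lemma
  assumes "sq_integrable mu x" "sq_integrable mu y"
  shows borel_measurable_diffusion_diff: "(\<lambda>\<omega>. sg (x \<omega>) - sg (y \<omega>)) \<in> borel_measurable mu"
    and norm_diffusion_diff_le: "norm (sg (x \<omega>) - sg (y \<omega>)) \<le> 2 * K"
  using assms norm_triangle_ineq4[of "sg (x \<omega>)" "sg (y \<omega>)"] sg_bounded[of "x \<omega>"] sg_bounded[of "y \<omega>"]
  by (auto intro!: borel_measurable_diff borel_measurable_continuous_on[OF continuous_coefficients(3)]
      simp: sq_integrable_def)

lemma
  assumes i: "i \<le> N" and m: "m < n" and x: "sq_integrable mu x" and y: "sq_integrable mu y"
    and dep: "depends_only_on (space mu) (noise_before m) x" "depends_only_on (space mu) (noise_before m) y"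
  shows sq_integrable_diffusion_increment:
      "sq_integrable mu (\<lambda>\<omega>. (sg (x \<omega>) - sg (y \<omega>)) *v incr_f l \<omega> i m)"
    and integral_diffusion_increment_sq_le:
      "(\<integral>\<omega>. (norm ((sg (x \<omega>) - sg (y \<omega>)) *v incr_f l \<omega> i m))\<^sup>2 \<partial>mu)
         \<le> h * CARD('d) * K\<^sup>2 * (\<integral>\<omega>. (norm (x \<omega> - y \<omega>))\<^sup>2 \<partial>mu)"
    and integral_norm_add_diffusion_increment_sq:
      "sq_integrable mu F \<Longrightarrow> depends_only_on (space mu) (noise_before m) F \<Longrightarrow>
       (\<integral>\<omega>. (norm (F \<omega> + (sg (x \<omega>) - sg (y \<omega>)) *v incr_f l \<omega> i m))\<^sup>2 \<partial>mu) =
       (\<integral>\<omega>. (norm (F \<omega>))\<^sup>2 \<partial>mu) + (\<integral>\<omega>. (norm ((sg (x \<omega>) - sg (y \<omega>)) *v incr_f l \<omega> i m))\<^sup>2 \<partial>mu)"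
proof -
  note G = borel_measurable_diffusion_diff[OF x y] norm_diffusion_diff_le[OF x y]
    depends_only_on_comp2[OF dep, of "\<lambda>u v. sg u - sg v"]
  show "sq_integrable mu (\<lambda>\<omega>. (sg (x \<omega>) - sg (y \<omega>)) *v incr_f l \<omega> i m)"
    by (rule sq_integrable_increment[OF i m G])
  show "(\<integral>\<omega>. (norm (F \<omega> + (sg (x \<omega>) - sg (y \<omega>)) *v incr_f l \<omega> i m))\<^sup>2 \<partial>mu) =
       (\<integral>\<omega>. (norm (F \<omega>))\<^sup>2 \<partial>mu) + (\<integral>\<omega>. (norm ((sg (x \<omega>) - sg (y \<omega>)) *v incr_f l \<omega> i m))\<^sup>2 \<partial>mu)"
    if "sq_integrable mu F" "depends_only_on (space mu) (noise_before m) F"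
    by (rule integral_norm_add_increment_sq[OF i m that G])
  have "(\<integral>\<omega>. (norm (sg (x \<omega>) - sg (y \<omega>)))\<^sup>2 \<partial>mu) \<le> (\<integral>\<omega>. K\<^sup>2 * (norm (x \<omega> - y \<omega>))\<^sup>2 \<partial>mu)"
  proof (rule integral_mono)
    show "integrable mu (\<lambda>\<omega>. (norm (sg (x \<omega>) - sg (y \<omega>)))\<^sup>2)"
      using sq_integrableD(2)[OF P.sq_integrable_bounded[OF G(1,2)]] .
    show "integrable mu (\<lambda>\<omega>. K\<^sup>2 * (norm (x \<omega> - y \<omega>))\<^sup>2)"
      using sq_integrableD(2)[OF sq_integrable_diff[OF x y]] by simp
    show "(norm (sg (x \<omega>) - sg (y \<omega>)))\<^sup>2 \<le> K\<^sup>2 * (norm (x \<omega> - y \<omega>))\<^sup>2" for \<omega>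
      using sg_Lipschitz[of "x \<omega>" "y \<omega>"] by (metis norm_ge_zero power_mono power_mult_distrib)
  qed
  then have "h * CARD('d) * (\<integral>\<omega>. (norm (sg (x \<omega>) - sg (y \<omega>)))\<^sup>2 \<partial>mu)
      \<le> h * CARD('d) * (K\<^sup>2 * (\<integral>\<omega>. (norm (x \<omega> - y \<omega>))\<^sup>2 \<partial>mu))"
    using h_pos by (intro mult_left_mono) auto
  then show "(\<integral>\<omega>. (norm ((sg (x \<omega>) - sg (y \<omega>)) *v incr_f l \<omega> i m))\<^sup>2 \<partial>mu)
      \<le> h * CARD('d) * K\<^sup>2 * (\<integral>\<omega>. (norm (x \<omega> - y \<omega>))\<^sup>2 \<partial>mu)"
    using integral_norm_increment_sq_le[OF i m G] by (simp add: mult_ac)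
qed

lemma integral_half_step_sq_le:
  assumes k: "2 * k < n" and j: "j \<le> N"
    and b: "(\<integral>\<omega>. (norm (fine_path \<omega> (2 * k) j - coarse_path \<omega> k j))\<^sup>2 \<partial>mu) \<le> b"
  shows "(\<integral>\<omega>. (norm (fine_path \<omega> (Suc (2 * k)) j - coarse_path \<omega> k j))\<^sup>2 \<partial>mu)
           \<le> 2 * b + 4 * K\<^sup>2 * (1 + CARD('d)) * h"
proof -
  let ?e = "\<lambda>\<omega>. fine_path \<omega> (2 * k) j - coarse_path \<omega> k j"
  let ?\<beta> = "\<lambda>\<omega>. incr_f l \<omega> j (2 * k)"
  have e: "sq_integrable mu ?e" and \<beta>: "sq_integrable mu ?\<beta>"
    using k j by (auto intro: sq_integrable_path_diff sq_integrable_incr_f)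
  have pointwise: "(norm (fine_path \<omega> (Suc (2 * k)) j - coarse_path \<omega> k j))\<^sup>2
      \<le> 2 * (norm (?e \<omega>))\<^sup>2 + 4 * (h * K)\<^sup>2 + 4 * K\<^sup>2 * (norm (?\<beta> \<omega>))\<^sup>2" for \<omega>
  proof -
    let ?A = "h *\<^sub>R a (fine_path \<omega> (2 * k) j, interaction_mean xi N (fine_path \<omega> (2 * k)) (fine_path \<omega> (2 * k) j))"
    let ?B = "sg (fine_path \<omega> (2 * k) j) *v ?\<beta> \<omega>"
    have "norm ?A \<le> h * K" using h_pos a_bounded by (simp add: mult_left_mono)
    then have "(norm ?A)\<^sup>2 \<le> (h * K)\<^sup>2" by (rule power_mono) simp
    moreover have "norm ?B \<le> K * norm (?\<beta> \<omega>)"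
      using norm_matrix_vector_mult_le sg_bounded by (meson mult_right_mono norm_ge_zero order_trans)
    then have "(norm ?B)\<^sup>2 \<le> (K * norm (?\<beta> \<omega>))\<^sup>2" by (rule power_mono) simp
    ultimately have bound: "(norm (?e \<omega> + (?A + ?B)))\<^sup>2
        \<le> 2 * (norm (?e \<omega>))\<^sup>2 + 4 * (h * K)\<^sup>2 + 4 * (K * norm (?\<beta> \<omega>))\<^sup>2"
      using power2_norm_add_le_2[of ?A ?B] power2_norm_add_le_2[of "?e \<omega>" "?A + ?B"] by linarith
    have "fine_path \<omega> (Suc (2 * k)) j - coarse_path \<omega> k j = ?e \<omega> + (?A + ?B)"
      using fine_path_Suc[OF j] by (simp add: euler_step_def algebra_simps)
    then show ?thesis
      using bound by (simp only: power_mult_distrib mult.assoc)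
  qed
  have "(\<integral>\<omega>. (norm (fine_path \<omega> (Suc (2 * k)) j - coarse_path \<omega> k j))\<^sup>2 \<partial>mu)
      \<le> (\<integral>\<omega>. 2 * (norm (?e \<omega>))\<^sup>2 + 4 * (h * K)\<^sup>2 + 4 * K\<^sup>2 * (norm (?\<beta> \<omega>))\<^sup>2 \<partial>mu)"
    using sq_integrableD(2)[OF sq_integrable_path_diff, of "Suc (2 * k)" k j] k j
      sq_integrableD(2)[OF e] sq_integrableD(2)[OF \<beta>]
    by (intro integral_mono pointwise) auto
  also have "\<dots> = 2 * (\<integral>\<omega>. (norm (?e \<omega>))\<^sup>2 \<partial>mu) + 4 * (h * K)\<^sup>2 + 4 * K\<^sup>2 * (h * CARD('d))"
    using sq_integrableD(2)[OF e] sq_integrableD(2)[OF \<beta>] integral_norm_incr_f_sq[OF j k]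
    by (simp add: P.prob_space)
  also have "\<dots> \<le> 2 * b + 4 * K\<^sup>2 * (1 + CARD('d)) * h"
  proof -
    have "h * h \<le> h * 1" using h_pos h_le_1 by (intro mult_left_mono) auto
    then have "(h * h) * K\<^sup>2 \<le> h * K\<^sup>2" by (intro mult_right_mono) auto
    then have "(h * K)\<^sup>2 \<le> h * K\<^sup>2" by (simp only: power_mult_distrib power2_eq_square[of h])
    then show ?thesis using b by (simp add: algebra_simps)
  qed
  finally show ?thesis .
qed

lemma integral_martingale_part_le:
  assumes i: "i \<le> N" and m: "Suc m < n"
    and u: "sq_integrable mu u" "depends_only_on (space mu) (noise_before m) u"
    and w: "sq_integrable mu w" "depends_only_on (space mu) (noise_before m) w"
    and v: "sq_integrable mu v" "depends_only_on (space mu) (noise_before (Suc m)) v"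
    and uw: "(\<integral>\<omega>. (norm (u \<omega> - w \<omega>))\<^sup>2 \<partial>mu) \<le> b" and vw: "(\<integral>\<omega>. (norm (v \<omega> - w \<omega>))\<^sup>2 \<partial>mu) \<le> s"
  defines "F \<equiv> \<lambda>\<omega>. (u \<omega> - w \<omega>) + (sg (u \<omega>) - sg (w \<omega>)) *v incr_f l \<omega> i m"
  shows "sq_integrable mu (\<lambda>\<omega>. F \<omega> + (sg (v \<omega>) - sg (w \<omega>)) *v incr_f l \<omega> i (Suc m))"
    and "(\<integral>\<omega>. (norm (F \<omega> + (sg (v \<omega>) - sg (w \<omega>)) *v incr_f l \<omega> i (Suc m)))\<^sup>2 \<partial>mu)
           \<le> b + h * CARD('d) * K\<^sup>2 * (b + s)"
proof -
  have m': "m < n" using m by simp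
  have before: "noise_before m \<subseteq> noise_before (Suc m)" by (rule noise_before_mono) simp
  note w' = w(1) depends_only_on_mono[OF w(2) before]
  have F: "sq_integrable mu F"
    unfolding F_def using sq_integrable_diffusion_increment[OF i m' u(1) w(1) u(2) w(2)]
    by (intro sq_integrable_add sq_integrable_diff u w)
  have "depends_only_on (space mu) (noise_before (Suc m)) (\<lambda>\<omega>. (u \<omega>, w \<omega>))"
    using depends_only_on_comp2[OF u(2) w(2), of Pair] before by (rule depends_only_on_mono)
  from depends_only_on_comp2[OF this depends_only_on_mono[OF incr_f_depends_only_on noise_at_subset_noise_before],
      of "\<lambda>p \<beta>. (fst p - snd p) + (sg (fst p) - sg (snd p)) *v \<beta>"]
  have F_dep: "depends_only_on (space mu) (noise_before (Suc m)) F"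
    by (simp add: F_def)
  show "sq_integrable mu (\<lambda>\<omega>. F \<omega> + (sg (v \<omega>) - sg (w \<omega>)) *v incr_f l \<omega> i (Suc m))"
    using F sq_integrable_diffusion_increment[OF i m v(1) w'(1) v(2) w'(2)] by (rule sq_integrable_add)
  have "(\<integral>\<omega>. (norm (F \<omega> + (sg (v \<omega>) - sg (w \<omega>)) *v incr_f l \<omega> i (Suc m)))\<^sup>2 \<partial>mu)
      = (\<integral>\<omega>. (norm (u \<omega> - w \<omega>))\<^sup>2 \<partial>mu)
        + (\<integral>\<omega>. (norm ((sg (u \<omega>) - sg (w \<omega>)) *v incr_f l \<omega> i m))\<^sup>2 \<partial>mu)
        + (\<integral>\<omega>. (norm ((sg (v \<omega>) - sg (w \<omega>)) *v incr_f l \<omega> i (Suc m)))\<^sup>2 \<partial>mu)"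
    using integral_norm_add_diffusion_increment_sq[OF i m v(1) w'(1) v(2) w'(2) F F_dep]
      integral_norm_add_diffusion_increment_sq[OF i m' u(1) w(1) u(2) w(2)
        sq_integrable_diff[OF u(1) w(1)] depends_only_on_comp2[OF u(2) w(2)]]
    unfolding F_def by simp
  also have "\<dots> \<le> b + h * CARD('d) * K\<^sup>2 * b + h * CARD('d) * K\<^sup>2 * s"
  proof -
    have c: "0 \<le> h * CARD('d) * K\<^sup>2" using h_pos by simp
    show ?thesis
      using integral_diffusion_increment_sq_le[OF i m' u(1) w(1) u(2) w(2)]
        integral_diffusion_increment_sq_le[OF i m v(1) w'(1) v(2) w'(2)]
        uw vw mult_left_mono[OF uw c] mult_left_mono[OF vw c]
      by linarith
  qed
  finally show "(\<integral>\<omega>. (norm (F \<omega> + (sg (v \<omega>) - sg (w \<omega>)) *v incr_f l \<omega> i (Suc m)))\<^sup>2 \<partial>mu)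
      \<le> b + h * CARD('d) * K\<^sup>2 * (b + s)"
    by (simp add: algebra_simps)
qed

lemma integral_drift_part_le:
  assumes i: "i \<le> N"
    and U: "\<And>j. j \<le> N \<Longrightarrow> sq_integrable mu (\<lambda>\<omega>. U \<omega> j)" and V: "\<And>j. j \<le> N \<Longrightarrow> sq_integrable mu (\<lambda>\<omega>. V \<omega> j)"
    and W: "\<And>j. j \<le> N \<Longrightarrow> sq_integrable mu (\<lambda>\<omega>. W \<omega> j)"
    and UW: "\<And>j. j \<le> N \<Longrightarrow> (\<integral>\<omega>. (norm (U \<omega> j - W \<omega> j))\<^sup>2 \<partial>mu) \<le> b"
    and VW: "\<And>j. j \<le> N \<Longrightarrow> (\<integral>\<omega>. (norm (V \<omega> j - W \<omega> j))\<^sup>2 \<partial>mu) \<le> s"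
  defines "A \<equiv> \<lambda>X \<omega>. a (X \<omega> i, interaction_mean xi N (X \<omega>) (X \<omega> i)) - a (W \<omega> i, interaction_mean xi N (W \<omega>) (W \<omega> i))"
  shows "sq_integrable mu (\<lambda>\<omega>. h *\<^sub>R A U \<omega> + h *\<^sub>R A V \<omega>)"
    and "(\<integral>\<omega>. (norm (h *\<^sub>R A U \<omega> + h *\<^sub>R A V \<omega>))\<^sup>2 \<partial>mu) \<le> h\<^sup>2 * (2 * K\<^sup>2 * (1 + 2 * K\<^sup>2)) * (b + s)"
proof -
  have sq: "sq_integrable mu (A X)"
    and E: "(\<integral>\<omega>. (norm (A X \<omega>))\<^sup>2 \<partial>mu) \<le> K\<^sup>2 * (1 + 2 * K\<^sup>2) * c"
    if X: "\<And>j. j \<le> N \<Longrightarrow> sq_integrable mu (\<lambda>\<omega>. X \<omega> j)"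
      and XW: "\<And>j. j \<le> N \<Longrightarrow> (\<integral>\<omega>. (norm (X \<omega> j - W \<omega> j))\<^sup>2 \<partial>mu) \<le> c" for X c
    using integral_drift_diff_sq_le[of X W "\<lambda>\<omega>. X \<omega> i" "\<lambda>\<omega>. W \<omega> i" c] X W XW i
    unfolding A_def by simp_all
  show "sq_integrable mu (\<lambda>\<omega>. h *\<^sub>R A U \<omega> + h *\<^sub>R A V \<omega>)"
    using sq[OF U UW] sq[OF V VW] by (intro sq_integrable_add sq_integrable_scaleR)
  have "(\<integral>\<omega>. (norm (h *\<^sub>R A U \<omega> + h *\<^sub>R A V \<omega>))\<^sup>2 \<partial>mu)
      \<le> 2 * (\<integral>\<omega>. (norm (h *\<^sub>R A U \<omega>))\<^sup>2 \<partial>mu) + 2 * (\<integral>\<omega>. (norm (h *\<^sub>R A V \<omega>))\<^sup>2 \<partial>mu)"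
    using integral_power2_norm_add_le[OF sq_integrable_scaleR[OF sq[OF U UW]] sq_integrable_scaleR[OF sq[OF V VW]], of 1]
    by simp
  also have "\<dots> = 2 * h\<^sup>2 * (\<integral>\<omega>. (norm (A U \<omega>))\<^sup>2 \<partial>mu) + 2 * h\<^sup>2 * (\<integral>\<omega>. (norm (A V \<omega>))\<^sup>2 \<partial>mu)"
    by (simp add: power_mult_distrib)
  also have "\<dots> \<le> 2 * h\<^sup>2 * (K\<^sup>2 * (1 + 2 * K\<^sup>2) * b) + 2 * h\<^sup>2 * (K\<^sup>2 * (1 + 2 * K\<^sup>2) * s)"
    using E[OF U UW] E[OF V VW] by (intro add_mono mult_left_mono) auto
  finally show "(\<integral>\<omega>. (norm (h *\<^sub>R A U \<omega> + h *\<^sub>R A V \<omega>))\<^sup>2 \<partial>mu) \<le> h\<^sup>2 * (2 * K\<^sup>2 * (1 + 2 * K\<^sup>2)) * (b + s)"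
    by (simp add: algebra_simps)
qed

lemma fine_coarse_two_step_diff:
  assumes i: "i \<le> N"
  shows "fine_path \<omega> (Suc (Suc (2 * k))) i - coarse_path \<omega> (Suc k) i =
      ((fine_path \<omega> (2 * k) i - coarse_path \<omega> k i)
        + (sg (fine_path \<omega> (2 * k) i) - sg (coarse_path \<omega> k i)) *v incr_f l \<omega> i (2 * k)
        + (sg (fine_path \<omega> (Suc (2 * k)) i) - sg (coarse_path \<omega> k i)) *v incr_f l \<omega> i (Suc (2 * k)))
      + (h *\<^sub>R (a (fine_path \<omega> (2 * k) i, interaction_mean xi N (fine_path \<omega> (2 * k)) (fine_path \<omega> (2 * k) i))
                - a (coarse_path \<omega> k i, interaction_mean xi N (coarse_path \<omega> k) (coarse_path \<omega> k i)))
         + h *\<^sub>R (a (fine_path \<omega> (Suc (2 * k)) i, interaction_mean xi N (fine_path \<omega> (Suc (2 * k))) (fine_path \<omega> (Suc (2 * k)) i))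
                - a (coarse_path \<omega> k i, interaction_mean xi N (coarse_path \<omega> k) (coarse_path \<omega> k i))))"
proof -
  have "fine_path \<omega> (Suc (Suc (2 * k))) i - coarse_path \<omega> (Suc k) i =
    euler_step a xi sg N h (fine_path \<omega> (Suc (2 * k))) (fine_path \<omega> (Suc (2 * k)) i) (incr_f l \<omega> i (Suc (2 * k)))
    - euler_step a xi sg N (2 * h) (coarse_path \<omega> k) (coarse_path \<omega> k i)
        (incr_f l \<omega> i (2 * k) + incr_f l \<omega> i (Suc (2 * k)))"
    unfolding fine_path_Suc[OF i, of \<omega> "Suc (2 * k)"] coarse_path_Suc[OF i, of \<omega> k] incr_c_def by simp
  also note euler_step_two_steps_diff[OF fine_path_Suc[OF i]]
  finally show ?thesis .
qed

lemma mse_two_fine_steps: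
  assumes k: "2 * k + 2 \<le> n" and i: "i \<le> N" and b: "0 \<le> b"
    and IH: "\<And>j. j \<le> N \<Longrightarrow> (\<integral>\<omega>. (norm (fine_path \<omega> (2 * k) j - coarse_path \<omega> k j))\<^sup>2 \<partial>mu) \<le> b"
  shows "(\<integral>\<omega>. (norm (fine_path \<omega> (Suc (Suc (2 * k))) i - coarse_path \<omega> (Suc k) i))\<^sup>2 \<partial>mu)
           \<le> (1 + euler_mse_const K CARD('d) * h) * b + euler_mse_const K CARD('d) * h\<^sup>2"
proof -
  define c where "c = 4 * K\<^sup>2 * (1 + real CARD('d))"
  define Z where "Z = K\<^sup>2 * (real CARD('d) + 2 + 4 * K\<^sup>2)"
  define s where "s = 2 * b + c * h"
  have half: "(\<integral>\<omega>. (norm (fine_path \<omega> (Suc (2 * k)) j - coarse_path \<omega> k j))\<^sup>2 \<partial>mu) \<le> s" if "j \<le> N" for j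
    unfolding s_def c_def using integral_half_step_sq_le[OF _ that IH[OF that]] k by simp
  have sq: "sq_integrable mu (\<lambda>\<omega>. fine_path \<omega> (2 * k) j)" "sq_integrable mu (\<lambda>\<omega>. coarse_path \<omega> k j)"
    "sq_integrable mu (\<lambda>\<omega>. fine_path \<omega> (Suc (2 * k)) j)" if "j \<le> N" for j
    using k that by (auto intro: sq_integrable_fine_path sq_integrable_coarse_path)
  have dep: "depends_only_on (space mu) (noise_before (2 * k)) (\<lambda>\<omega>. fine_path \<omega> (2 * k) i)"
    "depends_only_on (space mu) (noise_before (2 * k)) (\<lambda>\<omega>. coarse_path \<omega> k i)"
    "depends_only_on (space mu) (noise_before (Suc (2 * k))) (\<lambda>\<omega>. fine_path \<omega> (Suc (2 * k)) i)"
    using i by (auto intro: fine_path_depends_only_on coarse_path_depends_only_on)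
  have m: "Suc (2 * k) < n" using k by simp
  note M = integral_martingale_part_le[OF i m sq(1)[OF i] dep(1) sq(2)[OF i] dep(2) sq(3)[OF i] dep(3) IH[OF i] half[OF i]]
  note D = integral_drift_part_le[OF i sq(1) sq(3) sq(2) IH half]
  note split = fine_coarse_two_step_diff[OF i]
  have Z: "0 \<le> Z" and c: "0 \<le> c" and C: "euler_mse_const K CARD('d) = 1 + 4 * Z * (3 + c)"
    unfolding Z_def c_def euler_mse_const_def by simp_all
  have "h * CARD('d) * K\<^sup>2 * (b + s) \<le> h * Z * (3 * b + c * h)"
    and "h\<^sup>2 * (2 * K\<^sup>2 * (1 + 2 * K\<^sup>2)) * (b + s) \<le> h\<^sup>2 * Z * (3 * b + c * h)"
    unfolding Z_def s_def c_def using b h_pos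
    by (auto intro!: mult_right_mono mult_left_mono simp: algebra_simps)
  note P = order_trans[OF M(2) add_left_mono[OF this(1)]] and Q = order_trans[OF D(2) this(2)]
  show ?thesis
    unfolding C split
    by (rule mse_recursion_arith[OF h_pos h_le_1 b Z c P Q integral_power2_norm_add_le[OF M(1) D(1) h_pos]])
qed

lemma mse_fine_coarse_le:
  assumes "2 * k \<le> n" "i \<le> N" "h * k \<le> T"
  shows "(\<integral>\<omega>. (norm (fine_path \<omega> (2 * k) i - coarse_path \<omega> k i))\<^sup>2 \<partial>mu)
           \<le> euler_mse_const K CARD('d) * T * exp (euler_mse_const K CARD('d) * T) * h"
proof (rule discrete_Gronwall[where J = "{..N}" and n = "n div 2"
      and e = "\<lambda>k i. \<integral>\<omega>. (norm (fine_path \<omega> (2 * k) i - coarse_path \<omega> k i))\<^sup>2 \<partial>mu"])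
  show "0 \<le> euler_mse_const K CARD('d)"
    unfolding euler_mse_const_def by simp
  show "(\<integral>\<omega>. (norm (fine_path \<omega> (2 * Suc k) i - coarse_path \<omega> (Suc k) i))\<^sup>2 \<partial>mu)
      \<le> (1 + euler_mse_const K CARD('d) * h) * b + euler_mse_const K CARD('d) * h\<^sup>2"
    if "k < n div 2" "0 \<le> b" "\<And>j. j \<in> {..N} \<Longrightarrow> (\<integral>\<omega>. (norm (fine_path \<omega> (2 * k) j - coarse_path \<omega> k j))\<^sup>2 \<partial>mu) \<le> b"
      "i \<in> {..N}" for k b i
    using mse_two_fine_steps[of k i b] that by simp
qed (use assms h_pos in \<open>auto simp: fine_path_0 coarse_path_0\<close>)

lemma mse_observation_times_le:
  fixes tix :: "'t::finite \<Rightarrow> nat"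
  assumes l: "1 \<le> l" and tix: "\<And>t. tix t \<le> CARD('t)" and n: "CARD('t) * 2 ^ l \<le> n"
  defines "X \<equiv> \<lambda>\<omega>. \<chi> t. fine_path \<omega> (2 * (tix t * 2 ^ (l - 1))) N"
    and "X' \<equiv> \<lambda>\<omega>. \<chi> t. coarse_path \<omega> (tix t * 2 ^ (l - 1)) N"
    and "C \<equiv> euler_mse_const K CARD('d)"
  shows "integrable mu (\<lambda>\<omega>. (norm (X \<omega> - X' \<omega>))\<^sup>2)"
    and "(\<integral>\<omega>. (norm (X \<omega> - X' \<omega>))\<^sup>2 \<partial>mu) \<le> real CARD('t) * (C * CARD('t) * exp (C * CARD('t)) * h)"
proof -
  define k where "k t = tix t * 2 ^ (l - 1)" for t
  have k_le: "2 * k t \<le> n" for t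
  proof -
    have "2 * k t = tix t * 2 ^ l" unfolding k_def using l by (cases l) auto
    then show ?thesis using tix[of t] n by (metis mult_le_mono1 order_trans)
  qed
  have k_time: "h * k t \<le> CARD('t)" for t
  proof -
    have "h * k t = tix t * (h * 2 ^ (l - 1))" unfolding k_def by simp
    also have "\<dots> = tix t / 2" using Delta_mult_power_pred[OF l] by simp
    finally show ?thesis using tix[of t] by simp
  qed
  have norm_eq: "(norm (X \<omega> - X' \<omega>))\<^sup>2 = (\<Sum>t\<in>UNIV. (norm (fine_path \<omega> (2 * k t) N - coarse_path \<omega> (k t) N))\<^sup>2)" for \<omega>
    unfolding X_def X'_def k_def by (subst power2_norm_vec) simp
  have sq: "integrable mu (\<lambda>\<omega>. (norm (fine_path \<omega> (2 * k t) N - coarse_path \<omega> (k t) N))\<^sup>2)" for t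
    using sq_integrableD(2)[OF sq_integrable_path_diff[OF k_le k_le order_refl]] by simp
  then show "integrable mu (\<lambda>\<omega>. (norm (X \<omega> - X' \<omega>))\<^sup>2)"
    unfolding norm_eq by auto
  have "(\<integral>\<omega>. (norm (X \<omega> - X' \<omega>))\<^sup>2 \<partial>mu) = (\<Sum>t\<in>UNIV. \<integral>\<omega>. (norm (fine_path \<omega> (2 * k t) N - coarse_path \<omega> (k t) N))\<^sup>2 \<partial>mu)"
    unfolding norm_eq using sq by (simp add: Bochner_Integration.integral_sum)
  also have "\<dots> \<le> (\<Sum>t\<in>(UNIV::'t set). C * CARD('t) * exp (C * CARD('t)) * h)"
    unfolding C_def by (intro sum_mono mse_fine_coarse_le[OF k_le order_refl k_time])
  finally show "(\<integral>\<omega>. (norm (X \<omega> - X' \<omega>))\<^sup>2 \<partial>mu) \<le> real CARD('t) * (C * CARD('t) * exp (C * CARD('t)) * h)"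
    by simp
qed

lemma coupled_pair_eq_paths:
  assumes "a = A \<theta>" "xi = Xi \<theta>" and l: "1 \<le> l"
  shows "coupled_pair A Xi sg x0 tix l N \<theta> \<omega> =
    ((\<chi> t. fine_path \<omega> (2 * (tix t * 2 ^ (l - 1))) N), (\<chi> t. coarse_path \<omega> (tix t * 2 ^ (l - 1)) N))"
proof -
  have steps: "tix t * 2 ^ l = 2 * (tix t * 2 ^ (l - 1))" for t
    using l by (cases l) auto
  show ?thesis
    unfolding coupled_pair_def fine_path_def coarse_path_def euler_system_def Delta_pred[OF l]
    by (simp add: steps assms(1,2))
qed

end

lemma C2b_bd_mono: "C2b_bd S M f \<Longrightarrow> M \<le> M' \<Longrightarrow> C2b_bd S M' f"
  unfolding C2b_bd_def by (meson order_trans)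

lemma C2b_on_finite_uniform:
  assumes "finite T" "\<And>t. t \<in> T \<Longrightarrow> C2b_on S (f t)"
  shows "\<exists>M. \<forall>t\<in>T. C2b_bd S M (f t)"
proof -
  obtain M where M: "\<And>t. t \<in> T \<Longrightarrow> C2b_bd S (M t) (f t)"
    using assms(2) unfolding C2b_on_def by metis
  have "M t \<le> (\<Sum>t\<in>T. \<bar>M t\<bar>)" if "t \<in> T" for t
    using member_le_sum[OF that, of "\<lambda>t. \<bar>M t\<bar>"] assms(1) by simp
  then show ?thesis
    using M C2b_bd_mono by blast
qed

lemma C2b_bd_Lipschitz:
  fixes f :: "'a::euclidean_space \<Rightarrow> 'b::real_normed_vector"
  assumes "C2b_bd UNIV M f"
  shows "norm (f x - f y) \<le> M * norm (x - y)" and "norm (f x) \<le> M"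
proof -
  obtain Df :: "'a \<Rightarrow> 'a \<Rightarrow>\<^sub>L 'b" where d: "\<And>x. (f has_derivative blinfun_apply (Df x)) (at x)"
    and b: "\<And>x. norm (f x) \<le> M \<and> norm (Df x) \<le> M"
    using assms unfolding C2b_bd_def by auto
  show "norm (f x) \<le> M" using b by blast
  have "onorm (blinfun_apply (Df z)) \<le> M" for z
    using b[of z] by (simp add: norm_blinfun.rep_eq)
  then show "norm (f x - f y) \<le> M * norm (x - y)"
    by (intro differentiable_bound[of UNIV f "\<lambda>z. blinfun_apply (Df z)"]) (use d in auto)
qed

lemma C2b_bd_slice_Lipschitz:
  fixes F :: "'p::euclidean_space \<times> 'a::euclidean_space \<Rightarrow> 'b::real_normed_vector"
  assumes "C2b_bd (Th \<times> UNIV) M F" and \<theta>: "\<theta> \<in> Th"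
  shows "norm (F (\<theta>, x) - F (\<theta>, y)) \<le> M * norm (x - y)" and "norm (F (\<theta>, x)) \<le> M"
proof -
  obtain Df :: "'p \<times> 'a \<Rightarrow> ('p \<times> 'a) \<Rightarrow>\<^sub>L 'b"
    where d: "\<And>z. z \<in> Th \<times> UNIV \<Longrightarrow> (F has_derivative blinfun_apply (Df z)) (at z within Th \<times> UNIV)"
      and b: "\<And>z. z \<in> Th \<times> UNIV \<Longrightarrow> norm (F z) \<le> M \<and> norm (Df z) \<le> M"
    using assms unfolding C2b_bd_def by blast
  show "norm (F (\<theta>, x)) \<le> M" using b \<theta> by blast
  have slice: "((\<lambda>x. F (\<theta>, x)) has_derivative (\<lambda>v. Df (\<theta>, z) (0, v))) (at z within UNIV)" for z
    by (rule has_derivative_in_compose2[OF d, of "\<lambda>x. (\<theta>, x)"])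
      (use \<theta> in \<open>auto intro!: derivative_eq_intros\<close>)
  have "onorm (\<lambda>v. Df (\<theta>, z) (0, v)) \<le> M" for z
  proof (rule onorm_le)
    fix v :: 'a
    have "norm (Df (\<theta>, z) (0, v)) \<le> norm (Df (\<theta>, z)) * norm v"
      using norm_blinfun[of "Df (\<theta>, z)" "(0, v)"] by (simp add: norm_Pair)
    also have "\<dots> \<le> M * norm v" using b[of "(\<theta>, z)"] \<theta> by (intro mult_right_mono) auto
    finally show "norm (Df (\<theta>, z) (0, v)) \<le> M * norm v" .
  qed
  then show "norm (F (\<theta>, x) - F (\<theta>, y)) \<le> M * norm (x - y)"
    by (intro differentiable_bound[of UNIV "\<lambda>x. F (\<theta>, x)" "\<lambda>z v. Df (\<theta>, z) (0, v)"]) (use slice in auto)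
qed

lemma coupled_euler_of_C2b:
  assumes "C2b_bd UNIV K a" "C2b_bd UNIV K xi" "C2b_bd UNIV K sg" "1 \<le> N"
  shows "coupled_euler a xi sg N K"
  using C2b_bd_Lipschitz[OF assms(1)] C2b_bd_Lipschitz[OF assms(2)] C2b_bd_Lipschitz[OF assms(3)] assms(4)
  by unfold_locales auto

section \<open>The reweighted integrand\<close>

definition coupled_weight_diff_sq ::
    "(real^'p \<Rightarrow> real^'d \<Rightarrow> 'y \<Rightarrow> real) \<Rightarrow> (nat \<Rightarrow> 'y) \<Rightarrow> ('t::finite \<Rightarrow> nat) \<Rightarrow>
     ((real^'p) \<times> (real^'d^'t) \<Rightarrow> real) \<Rightarrow> real^'p \<Rightarrow> real^'d^'t \<Rightarrow> real^'d^'t \<Rightarrow> real" where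
  "coupled_weight_diff_sq G y tix \<phi> \<theta> x x' =
     (\<phi> (\<theta>, x) * (\<Prod>t\<in>UNIV. Hchk G (y (tix t)) \<theta> (x $ t) (x' $ t))
      - \<phi> (\<theta>, x') * (\<Prod>t\<in>UNIV. Hchk G (y (tix t)) \<theta> (x' $ t) (x $ t)))\<^sup>2"

lemma abs_prod_diff_le:
  fixes f g :: "'s \<Rightarrow> real"
  assumes "finite S" "1 \<le> B" "\<And>s. s \<in> S \<Longrightarrow> \<bar>f s\<bar> \<le> B" "\<And>s. s \<in> S \<Longrightarrow> \<bar>g s\<bar> \<le> B"
  shows "\<bar>(\<Prod>s\<in>S. f s) - (\<Prod>s\<in>S. g s)\<bar> \<le> B ^ card S * (\<Sum>s\<in>S. \<bar>f s - g s\<bar>)"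
  using assms
proof (induction S rule: finite_induct)
  case empty
  then show ?case by simp
next
  case (insert x S)
  have f: "\<bar>\<Prod>s\<in>S. f s\<bar> \<le> B ^ card S"
  proof -
    have "\<bar>\<Prod>s\<in>S. f s\<bar> = (\<Prod>s\<in>S. \<bar>f s\<bar>)" by (rule abs_prod)
    also have "\<dots> \<le> (\<Prod>s\<in>S. B)" using insert.prems by (intro prod_mono) auto
    finally show ?thesis by simp
  qed
  have IH: "\<bar>(\<Prod>s\<in>S. f s) - (\<Prod>s\<in>S. g s)\<bar> \<le> B ^ card S * (\<Sum>s\<in>S. \<bar>f s - g s\<bar>)"
    using insert.prems by (intro insert.IH) auto
  have "(\<Prod>s\<in>insert x S. f s) - (\<Prod>s\<in>insert x S. g s) =
        (f x - g x) * (\<Prod>s\<in>S. f s) + g x * ((\<Prod>s\<in>S. f s) - (\<Prod>s\<in>S. g s))"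
    using insert.hyps by (simp add: algebra_simps)
  then have "\<bar>(\<Prod>s\<in>insert x S. f s) - (\<Prod>s\<in>insert x S. g s)\<bar> \<le>
        \<bar>f x - g x\<bar> * \<bar>\<Prod>s\<in>S. f s\<bar> + \<bar>g x\<bar> * \<bar>(\<Prod>s\<in>S. f s) - (\<Prod>s\<in>S. g s)\<bar>"
    by (simp add: abs_mult[symmetric] abs_triangle_ineq)
  also have "\<dots> \<le> \<bar>f x - g x\<bar> * B ^ card S + B * (B ^ card S * (\<Sum>s\<in>S. \<bar>f s - g s\<bar>))"
    using f IH insert.prems by (intro add_mono mult_mono) auto
  also have "\<dots> \<le> B ^ card (insert x S) * (\<Sum>s\<in>insert x S. \<bar>f s - g s\<bar>)"
  proof -
    have "\<bar>f x - g x\<bar> * B ^ card S \<le> \<bar>f x - g x\<bar> * B ^ Suc (card S)"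
      using insert.prems(1) by (intro mult_left_mono power_increasing) auto
    then show ?thesis using insert.hyps by (simp add: algebra_simps)
  qed
  finally show ?case .
qed

lemma Hprod_ge:
  assumes "0 \<le> g" "\<And>x yy. g \<le> G \<theta> x yy"
  shows "g ^ CARD('t) \<le> Hprod G y (tix :: 't::finite \<Rightarrow> nat) \<theta> x x'"
proof -
  have "g \<le> Hk G (y (tix t)) \<theta> (x $ t) (x' $ t)" for t
    using assms(2)[of "x $ t" "y (tix t)"] assms(2)[of "x' $ t" "y (tix t)"] by (simp add: Hk_def)
  then have "(\<Prod>t\<in>(UNIV::'t set). g) \<le> Hprod G y tix \<theta> x x'"
    unfolding Hprod_def using assms(1) by (intro prod_mono) auto
  then show ?thesis by simp
qed

text \<open>Both weights have the denominator Hprod, which is symmetric in x and x'.\<close>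
lemma coupled_weight_diff_sq_mult_Hprod:
  assumes "0 < Hprod G y tix \<theta> x x'"
  shows "coupled_weight_diff_sq G y tix \<phi> \<theta> x x' * Hprod G y tix \<theta> x x' =
    (\<phi> (\<theta>, x) * (\<Prod>t\<in>UNIV. G \<theta> (x $ t) (y (tix t))) - \<phi> (\<theta>, x') * (\<Prod>t\<in>UNIV. G \<theta> (x' $ t) (y (tix t))))\<^sup>2
      / Hprod G y tix \<theta> x x'"
proof -
  have "Hk G (y (tix t)) \<theta> (x' $ t) (x $ t) = Hk G (y (tix t)) \<theta> (x $ t) (x' $ t)" for t
    by (simp add: Hk_def)
  then have "(\<Prod>t\<in>UNIV. Hchk G (y (tix t)) \<theta> (x' $ t) (x $ t)) = (\<Prod>t\<in>UNIV. G \<theta> (x' $ t) (y (tix t))) / Hprod G y tix \<theta> x x'"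
    and "(\<Prod>t\<in>UNIV. Hchk G (y (tix t)) \<theta> (x $ t) (x' $ t)) = (\<Prod>t\<in>UNIV. G \<theta> (x $ t) (y (tix t))) / Hprod G y tix \<theta> x x'"
    unfolding Hchk_def Hprod_def by (simp_all add: prod_dividef)
  then show ?thesis
    unfolding coupled_weight_diff_sq_def using assms
    by (simp only:) (simp add: field_simps power2_eq_square)
qed

lemma reweighted_test_function_Lipschitz:
  fixes \<phi> :: "(real^'p::finite) \<times> (real^'d::finite^'t::finite) \<Rightarrow> real" and tix :: "'t \<Rightarrow> nat"
  assumes B: "1 \<le> B"
    and \<phi>: "\<And>x. \<bar>\<phi> (\<theta>, x)\<bar> \<le> B" "\<And>x x'. \<bar>\<phi> (\<theta>, x) - \<phi> (\<theta>, x')\<bar> \<le> B * norm (x - x')"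
    and G: "\<And>x t. \<bar>G \<theta> x (y (tix t))\<bar> \<le> B" "\<And>x x' t. \<bar>G \<theta> x (y (tix t)) - G \<theta> x' (y (tix t))\<bar> \<le> B * norm (x - x')"
  shows "\<bar>\<phi> (\<theta>, x) * (\<Prod>t\<in>UNIV. G \<theta> (x $ t) (y (tix t))) - \<phi> (\<theta>, x') * (\<Prod>t\<in>UNIV. G \<theta> (x' $ t) (y (tix t)))\<bar>
         \<le> B ^ (CARD('t) + 1) * (1 + B * CARD('t)) * norm (x - x')"
proof -
  let ?P = "\<lambda>x. \<Prod>t\<in>UNIV. G \<theta> (x $ t) (y (tix t))"
  have P: "\<bar>?P x\<bar> \<le> B ^ CARD('t)"
    using G(1) by (simp add: abs_prod prod_mono[where g="\<lambda>_. B", simplified])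
  have "\<bar>?P x - ?P x'\<bar> \<le> B ^ CARD('t) * (\<Sum>t\<in>UNIV. \<bar>G \<theta> (x $ t) (y (tix t)) - G \<theta> (x' $ t) (y (tix t))\<bar>)"
    using B G(1) by (intro abs_prod_diff_le) auto
  also have "\<dots> \<le> B ^ CARD('t) * (\<Sum>t\<in>(UNIV::'t set). B * norm (x - x'))"
  proof (intro mult_left_mono sum_mono)
    fix t
    have "B * norm (x $ t - x' $ t) \<le> B * norm (x - x')"
      using B Finite_Cartesian_Product.norm_nth_le[of "x - x'" t] by (intro mult_left_mono) auto
    then show "\<bar>G \<theta> (x $ t) (y (tix t)) - G \<theta> (x' $ t) (y (tix t))\<bar> \<le> B * norm (x - x')"
      using G(2)[of "x $ t" t "x' $ t"] by linarith
  qed (use B in simp)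
  finally have dP: "\<bar>?P x - ?P x'\<bar> \<le> B ^ CARD('t) * (B * CARD('t) * norm (x - x'))"
    by (simp add: mult_ac)
  have "\<phi> (\<theta>, x) * ?P x - \<phi> (\<theta>, x') * ?P x' = (\<phi> (\<theta>, x) - \<phi> (\<theta>, x')) * ?P x + \<phi> (\<theta>, x') * (?P x - ?P x')"
    by (simp add: algebra_simps)
  then have "\<bar>\<phi> (\<theta>, x) * ?P x - \<phi> (\<theta>, x') * ?P x'\<bar>
      \<le> \<bar>\<phi> (\<theta>, x) - \<phi> (\<theta>, x')\<bar> * \<bar>?P x\<bar> + \<bar>\<phi> (\<theta>, x')\<bar> * \<bar>?P x - ?P x'\<bar>"
    by (simp add: abs_mult[symmetric] abs_triangle_ineq)
  also have "\<dots> \<le> (B * norm (x - x')) * B ^ CARD('t) + B * (B ^ CARD('t) * (B * CARD('t) * norm (x - x')))"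
    using \<phi> P dP B by (intro add_mono mult_mono) auto
  finally show ?thesis
    by (simp add: algebra_simps)
qed

lemma coupled_weight_diff_sq_le:
  fixes \<phi> :: "(real^'p::finite) \<times> (real^'d::finite^'t::finite) \<Rightarrow> real" and tix :: "'t \<Rightarrow> nat"
  assumes \<theta>: "\<theta> \<in> \<Theta>" and B: "1 \<le> B" and \<phi>: "C2b_bd (\<Theta> \<times> UNIV) B \<phi>"
    and G: "\<And>t. C2b_bd (\<Theta> \<times> UNIV) B (\<lambda>(\<theta>, x). G \<theta> x (y (tix t)))"
    and g: "0 < g" "\<And>x yy. g \<le> G \<theta> x yy"
  shows "coupled_weight_diff_sq G y tix \<phi> \<theta> x x' * Hprod G y tix \<theta> x x'
           \<le> (B ^ (CARD('t) + 1) * (1 + B * CARD('t)))\<^sup>2 / g ^ CARD('t) * (norm (x - x'))\<^sup>2"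
proof -
  have H: "g ^ CARD('t) \<le> Hprod G y tix \<theta> x x'" and gT: "0 < g ^ CARD('t)"
    using g by (auto intro: Hprod_ge)
  have "\<bar>\<phi> (\<theta>, x) * (\<Prod>t\<in>UNIV. G \<theta> (x $ t) (y (tix t))) - \<phi> (\<theta>, x') * (\<Prod>t\<in>UNIV. G \<theta> (x' $ t) (y (tix t)))\<bar>
         \<le> B ^ (CARD('t) + 1) * (1 + B * CARD('t)) * norm (x - x')"
    using C2b_bd_slice_Lipschitz[OF \<phi> \<theta>] C2b_bd_slice_Lipschitz[OF G \<theta>] B
    by (intro reweighted_test_function_Lipschitz) auto
  from power_mono[OF this abs_ge_zero, of 2]
  have "(\<phi> (\<theta>, x) * (\<Prod>t\<in>UNIV. G \<theta> (x $ t) (y (tix t))) - \<phi> (\<theta>, x') * (\<Prod>t\<in>UNIV. G \<theta> (x' $ t) (y (tix t))))\<^sup>2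
         \<le> (B ^ (CARD('t) + 1) * (1 + B * CARD('t)) * norm (x - x'))\<^sup>2"
    by (simp only: power2_abs)
  then have "coupled_weight_diff_sq G y tix \<phi> \<theta> x x' * Hprod G y tix \<theta> x x'
      \<le> (B ^ (CARD('t) + 1) * (1 + B * CARD('t)) * norm (x - x'))\<^sup>2 / Hprod G y tix \<theta> x x'"
    unfolding coupled_weight_diff_sq_mult_Hprod[OF less_le_trans[OF gT H]]
    by (rule divide_right_mono) (use gT H in auto)
  also have "\<dots> \<le> (B ^ (CARD('t) + 1) * (1 + B * CARD('t)) * norm (x - x'))\<^sup>2 / g ^ CARD('t)"
    using gT H by (intro divide_left_mono) auto
  finally show ?thesis
    by (simp add: power_mult_distrib)
qed

section \<open>Expectations under the coupled posterior\<close>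

lemma integral_coupled_pair_le:
  fixes a :: "real^'p::finite \<Rightarrow> (real^'d::finite) \<times> real \<Rightarrow> real^'d" and tix :: "'t::finite \<Rightarrow> nat"
    and F :: "real^'d^'t \<Rightarrow> real^'d^'t \<Rightarrow> real"
  assumes euler: "coupled_euler (a \<theta>) (xi \<theta>) sg N K" and l: "1 \<le> l" and tix: "\<And>t. tix t \<le> CARD('t)"
    and F: "\<And>x x'. F x x' \<le> L * (norm (x - x'))\<^sup>2" and L: "0 \<le> L"
  defines "C \<equiv> euler_mse_const K CARD('d)"
  shows "(\<integral>\<omega>. (case coupled_pair a xi sg x0 tix l N \<theta> \<omega> of (x, x') \<Rightarrow> F x x')
            \<partial>(noise_space (CARD('t) * 2 ^ l) N :: (nat \<times> nat \<times> 'd \<Rightarrow> real) measure))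
         \<le> L * CARD('t) * (C * CARD('t) * exp (C * CARD('t))) * Delta l"
proof -
  interpret coupled_euler "a \<theta>" "xi \<theta>" sg x0 N l "CARD('t) * 2 ^ l" K
    by (rule euler)
  let ?X = "\<lambda>\<omega>. \<chi> t. fine_path \<omega> (2 * (tix t * 2 ^ (l - 1))) N"
    and ?X' = "\<lambda>\<omega>. \<chi> t. coarse_path \<omega> (tix t * 2 ^ (l - 1)) N"
    and ?F = "\<lambda>\<omega>. case coupled_pair a xi sg x0 tix l N \<theta> \<omega> of (x, x') \<Rightarrow> F x x'"
  note mse = mse_observation_times_le[where tix = tix, OF l tix order_refl]
  have pointwise: "?F \<omega> \<le> L * (norm (?X \<omega> - ?X' \<omega>))\<^sup>2" for \<omega>
    using F by (simp add: coupled_pair_eq_paths[of a \<theta> xi, OF refl refl l])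
  have bound: "L * (\<integral>\<omega>. (norm (?X \<omega> - ?X' \<omega>))\<^sup>2 \<partial>mu) \<le> L * CARD('t) * (C * CARD('t) * exp (C * CARD('t))) * h"
    using mult_left_mono[OF mse(2) L] by (simp add: C_def mult_ac)
  have "(\<integral>\<omega>. ?F \<omega> \<partial>mu) \<le> L * CARD('t) * (C * CARD('t) * exp (C * CARD('t))) * h"
  proof (cases "integrable mu ?F")
    case True
    have "(\<integral>\<omega>. ?F \<omega> \<partial>mu) \<le> (\<integral>\<omega>. L * (norm (?X \<omega> - ?X' \<omega>))\<^sup>2 \<partial>mu)"
      by (rule integral_mono[OF True integrable_mult_right[OF mse(1)] pointwise])
    with bound show ?thesis by simp
  next
    case False
    have "0 \<le> L * CARD('t) * (C * CARD('t) * exp (C * CARD('t))) * h"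
      using L h_pos by (simp add: C_def euler_mse_const_def)
    with False show ?thesis by (simp add: not_integrable_integral_eq)
  qed
  then show ?thesis
    unfolding noise_space_eq_PiM .
qed

lemma integral_Hprod_ge:
  fixes a :: "real^'p::finite \<Rightarrow> (real^'d::finite) \<times> real \<Rightarrow> real^'d" and tix :: "'t::finite \<Rightarrow> nat"
  assumes euler: "coupled_euler (a \<theta>) (xi \<theta>) sg N K" and l: "1 \<le> l"
    and g: "0 \<le> g" "\<And>x yy. g \<le> G \<theta> x yy"
    and G: "\<And>t. continuous_on UNIV (\<lambda>x. G \<theta> x (y (tix t)))" "\<And>x t. \<bar>G \<theta> x (y (tix t))\<bar> \<le> B"
  shows "g ^ CARD('t) \<le> (\<integral>\<omega>. (case coupled_pair a xi sg x0 tix l N \<theta> \<omega> of (x, x') \<Rightarrow> 1 * Hprod G y tix \<theta> x x')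
            \<partial>(noise_space (CARD('t) * 2 ^ l) N :: (nat \<times> nat \<times> 'd \<Rightarrow> real) measure))"
proof -
  interpret coupled_euler "a \<theta>" "xi \<theta>" sg x0 N l "CARD('t) * 2 ^ l" K
    by (rule euler)
  let ?H = "\<lambda>\<omega>. case coupled_pair a xi sg x0 tix l N \<theta> \<omega> of (x, x') \<Rightarrow> 1 * Hprod G y tix \<theta> x x'"
  define k where "k t = tix t * 2 ^ (l - 1)" for t
  have H_eq: "?H \<omega> = (\<Prod>t\<in>UNIV. (G \<theta> (fine_path \<omega> (2 * k t) N) (y (tix t)) + G \<theta> (coarse_path \<omega> (k t) N) (y (tix t))) / 2)" for \<omega>
    by (simp add: coupled_pair_eq_paths[of a \<theta> xi, OF refl refl l] Hprod_def Hk_def k_def)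
  have "(\<lambda>\<omega>. \<Prod>t\<in>UNIV. (G \<theta> (fine_path \<omega> (2 * k t) N) (y (tix t)) + G \<theta> (coarse_path \<omega> (k t) N) (y (tix t))) / 2)
      \<in> borel_measurable mu"
    by (intro borel_measurable_prod borel_measurable_divide borel_measurable_add borel_measurable_const
        borel_measurable_continuous_on[OF G(1)] borel_measurable_fine_path borel_measurable_coarse_path) simp_all
  then have meas: "?H \<in> borel_measurable mu"
    by (simp only: H_eq)
  have "norm (?H \<omega>) \<le> B ^ CARD('t)" for \<omega>
  proof -
    have "\<bar>(G \<theta> (fine_path \<omega> (2 * k t) N) (y (tix t)) + G \<theta> (coarse_path \<omega> (k t) N) (y (tix t))) / 2\<bar> \<le> B" for t
      using G(2)[of "fine_path \<omega> (2 * k t) N" t] G(2)[of "coarse_path \<omega> (k t) N" t] by simp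
    then show ?thesis
      unfolding H_eq real_norm_def abs_prod by (simp add: prod_mono[where g="\<lambda>_. B", simplified])
  qed
  with meas have "integrable mu ?H"
    by (intro P.integrable_const_bound[where B="B ^ CARD('t)"]) auto
  moreover have "g ^ CARD('t) \<le> ?H \<omega>" for \<omega>
    using Hprod_ge[of g G \<theta> y tix, OF g] by (simp split: prod.split)
  ultimately have "(\<integral>\<omega>. g ^ CARD('t) \<partial>mu) \<le> (\<integral>\<omega>. ?H \<omega> \<partial>mu)"
    by (intro integral_mono) auto
  then show ?thesis
    unfolding noise_space_eq_PiM by (simp add: P.prob_space)
qed

lemma
  fixes \<nu> :: "'a::euclidean_space \<Rightarrow> real"
  assumes \<Theta>: "\<Theta> \<in> sets lborel" and \<nu>: "\<nu> \<in> borel_measurable lborel" "\<forall>\<theta>\<in>\<Theta>. 0 \<le> \<nu> \<theta>"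
    and \<nu>_prob: "(\<integral>\<^sup>+\<theta>\<in>\<Theta>. ennreal (\<nu> \<theta>) \<partial>lborel) = 1"
  shows set_integral_density_le:
      "(\<And>\<theta>. \<theta> \<in> \<Theta> \<Longrightarrow> I \<theta> \<le> c) \<Longrightarrow> 0 \<le> c \<Longrightarrow> (LINT \<theta>:\<Theta>|lborel. \<nu> \<theta> * I \<theta>) \<le> c"
    and set_integral_density_ge:
      "(\<And>\<theta>. \<theta> \<in> \<Theta> \<Longrightarrow> g \<le> J \<theta>) \<Longrightarrow>
       (LINT \<theta>:\<Theta>|lborel. \<nu> \<theta> * J \<theta>) = 0 \<or> g \<le> (LINT \<theta>:\<Theta>|lborel. \<nu> \<theta> * J \<theta>)"
proof -
  define w where "w \<theta> = indicator \<Theta> \<theta> * \<nu> \<theta>" for \<theta>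
  have w_meas: "w \<in> borel_measurable lborel" unfolding w_def using \<Theta> \<nu>(1) by measurable
  have w_nonneg: "0 \<le> w \<theta>" for \<theta> unfolding w_def using \<nu>(2) by (auto split: split_indicator)
  have "(\<integral>\<^sup>+\<theta>. ennreal (w \<theta>) \<partial>lborel) = 1"
    using \<nu>_prob unfolding w_def by (simp add: mult.commute nn_integral_set_ennreal indicator_mult_ennreal)
  then have w_int: "integrable lborel w" and w_one: "(\<integral>\<theta>. w \<theta> \<partial>lborel) = 1"
    using integral_eq_nn_integral[OF w_meas] w_nonneg by (auto intro!: integrableI_nonneg[OF w_meas])
  have set_eq: "(LINT \<theta>:\<Theta>|lborel. \<nu> \<theta> * F \<theta>) = (\<integral>\<theta>. w \<theta> * F \<theta> \<partial>lborel)" for F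
    unfolding set_lebesgue_integral_def w_def by (simp add: mult.assoc)
  show "(LINT \<theta>:\<Theta>|lborel. \<nu> \<theta> * I \<theta>) \<le> c" if I: "\<And>\<theta>. \<theta> \<in> \<Theta> \<Longrightarrow> I \<theta> \<le> c" and c: "0 \<le> c"
  proof (cases "integrable lborel (\<lambda>\<theta>. w \<theta> * I \<theta>)")
    case True
    have "w \<theta> * I \<theta> \<le> w \<theta> * c" for \<theta>
      using I \<nu>(2) by (cases "\<theta> \<in> \<Theta>") (auto simp: w_def intro!: mult_left_mono)
    then have "(\<integral>\<theta>. w \<theta> * I \<theta> \<partial>lborel) \<le> (\<integral>\<theta>. w \<theta> * c \<partial>lborel)"
      using True w_int by (intro integral_mono) auto
    then show ?thesis using w_one by (simp add: set_eq)
  qed (use c in \<open>simp add: set_eq not_integrable_integral_eq\<close>)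
  show "(LINT \<theta>:\<Theta>|lborel. \<nu> \<theta> * J \<theta>) = 0 \<or> g \<le> (LINT \<theta>:\<Theta>|lborel. \<nu> \<theta> * J \<theta>)"
    if J: "\<And>\<theta>. \<theta> \<in> \<Theta> \<Longrightarrow> g \<le> J \<theta>"
  proof (cases "integrable lborel (\<lambda>\<theta>. w \<theta> * J \<theta>)")
    case True
    have "w \<theta> * g \<le> w \<theta> * J \<theta>" for \<theta>
      using J \<nu>(2) by (cases "\<theta> \<in> \<Theta>") (auto simp: w_def intro!: mult_left_mono)
    then have "(\<integral>\<theta>. w \<theta> * g \<partial>lborel) \<le> (\<integral>\<theta>. w \<theta> * J \<theta> \<partial>lborel)"
      using True w_int by (intro integral_mono) auto
    then show ?thesis using w_one by (simp add: set_eq)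
  qed (simp add: set_eq not_integrable_integral_eq)
qed

lemma check_pi_le:
  fixes tix :: "'t::finite \<Rightarrow> nat" and x0 :: "real^'d::finite"
  assumes \<Theta>: "\<Theta> \<in> sets lborel" and \<nu>: "\<nu> \<in> borel_measurable lborel" "\<forall>\<theta>\<in>\<Theta>. 0 \<le> \<nu> \<theta>"
    "(\<integral>\<^sup>+\<theta>\<in>\<Theta>. ennreal (\<nu> \<theta>) \<partial>lborel) = 1"
    and num: "\<And>\<theta>. \<theta> \<in> \<Theta> \<Longrightarrow> (\<integral>\<omega>. (case coupled_pair a xi sg x0 tix l N \<theta> \<omega> of (x, x') \<Rightarrow>
                 f \<theta> x x' * Hprod G y tix \<theta> x x')
         \<partial>(noise_space (CARD('t) * 2^l) N :: (nat \<times> nat \<times> 'd \<Rightarrow> real) measure)) \<le> c"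
    and den: "\<And>\<theta>. \<theta> \<in> \<Theta> \<Longrightarrow> g \<le> (\<integral>\<omega>. (case coupled_pair a xi sg x0 tix l N \<theta> \<omega> of (x, x') \<Rightarrow>
                 1 * Hprod G y tix \<theta> x x')
         \<partial>(noise_space (CARD('t) * 2^l) N :: (nat \<times> nat \<times> 'd \<Rightarrow> real) measure))"
    and g: "0 < g" and c: "0 \<le> c"
  shows "check_pi \<Theta> \<nu> a xi sg x0 G y tix l N f \<le> c / g"
proof -
  let ?num = "pi_unnorm \<Theta> \<nu> a xi sg x0 G y tix l N f"
  let ?den = "pi_unnorm \<Theta> \<nu> a xi sg x0 G y tix l N (\<lambda>_ _ _. 1)"
  have num_le: "?num \<le> c"
    unfolding pi_unnorm_def by (rule set_integral_density_le[OF \<Theta> \<nu> num c])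
  have "?den = 0 \<or> g \<le> ?den"
    unfolding pi_unnorm_def by (rule set_integral_density_ge[OF \<Theta> \<nu> den])
  then show ?thesis
  proof
    assume "g \<le> ?den"
    then have "?num / ?den \<le> c / ?den"
      using g num_le by (intro divide_right_mono) auto
    also have "\<dots> \<le> c / g"
      using g c \<open>g \<le> ?den\<close> by (intro divide_left_mono) auto
    finally show ?thesis unfolding check_pi_def .
  qed (use g c in \<open>simp add: check_pi_def\<close>)
qed

lemma check_pi_coupled_weight_diff_sq_le:
  fixes \<Theta> :: "(real^'p::finite) set" and x0 :: "real^'d::finite" and tix :: "'t::finite \<Rightarrow> nat"
    and a :: "real^'p \<Rightarrow> (real^'d) \<times> real \<Rightarrow> real^'d"
  assumes \<Theta>: "\<Theta> \<in> sets lborel" and \<nu>: "\<nu> \<in> borel_measurable lborel" "\<forall>\<theta>\<in>\<Theta>. 0 \<le> \<nu> \<theta>"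
      "(\<integral>\<^sup>+\<theta>\<in>\<Theta>. ennreal (\<nu> \<theta>) \<partial>lborel) = 1"
    and K: "\<And>\<theta>. \<theta> \<in> \<Theta> \<Longrightarrow> C2b_bd UNIV K (a \<theta>)" "\<And>\<theta>. \<theta> \<in> \<Theta> \<Longrightarrow> C2b_bd UNIV K (xi \<theta>)"
      "C2b_bd UNIV K sg"
    and B: "1 \<le> B" "C2b_bd (\<Theta> \<times> UNIV) B \<phi>" "\<And>t. C2b_bd (\<Theta> \<times> UNIV) B (\<lambda>(\<theta>, x). G \<theta> x (y (tix t)))"
    and g: "0 < g" "\<And>\<theta> x yy. \<theta> \<in> \<Theta> \<Longrightarrow> g \<le> G \<theta> x yy"
    and tix: "\<And>t. tix t \<le> CARD('t)" and l: "1 \<le> l" and N: "1 \<le> N"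
  defines "L \<equiv> (B ^ (CARD('t) + 1) * (1 + B * CARD('t)))\<^sup>2 / g ^ CARD('t)"
    and "C \<equiv> euler_mse_const K CARD('d)"
  shows "check_pi \<Theta> \<nu> a xi sg x0 G y tix l N (coupled_weight_diff_sq G y tix \<phi>)
           \<le> L * CARD('t) * (C * CARD('t) * exp (C * CARD('t))) / g ^ CARD('t) * Delta l"
proof -
  have "check_pi \<Theta> \<nu> a xi sg x0 G y tix l N (coupled_weight_diff_sq G y tix \<phi>)
      \<le> L * CARD('t) * (C * CARD('t) * exp (C * CARD('t))) * Delta l / g ^ CARD('t)"
  proof (rule check_pi_le[OF \<Theta> \<nu>])
    fix \<theta> assume \<theta>: "\<theta> \<in> \<Theta>"
    have euler: "coupled_euler (a \<theta>) (xi \<theta>) sg N K"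
      using K \<theta> N by (intro coupled_euler_of_C2b) auto
    show "(\<integral>\<omega>. (case coupled_pair a xi sg x0 tix l N \<theta> \<omega> of (x, x') \<Rightarrow>
          coupled_weight_diff_sq G y tix \<phi> \<theta> x x' * Hprod G y tix \<theta> x x')
        \<partial>(noise_space (CARD('t) * 2 ^ l) N :: (nat \<times> nat \<times> 'd \<Rightarrow> real) measure))
        \<le> L * CARD('t) * (C * CARD('t) * exp (C * CARD('t))) * Delta l"
      unfolding L_def C_def using g \<theta>
      by (intro integral_coupled_pair_le[of a \<theta> xi, OF euler l tix]
          coupled_weight_diff_sq_le[where G=G and y=y and tix=tix, OF \<theta> B]) auto
    show "g ^ CARD('t) \<le> (\<integral>\<omega>. (case coupled_pair a xi sg x0 tix l N \<theta> \<omega> of (x, x') \<Rightarrow> 1 * Hprod G y tix \<theta> x x')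
        \<partial>(noise_space (CARD('t) * 2 ^ l) N :: (nat \<times> nat \<times> 'd \<Rightarrow> real) measure))"
      using C2b_bd_slice_Lipschitz[OF B(3) \<theta>] g \<theta>
      by (intro integral_Hprod_ge[of a \<theta> xi, OF euler l] continuous_on_Lipschitz_bound[of _ B]) auto
  qed (use g in \<open>simp_all add: L_def C_def euler_mse_const_def Delta_def\<close>)
  then show ?thesis
    by (simp add: field_simps)
qed

theorem lemmaA3:
  fixes \<Theta> :: "(real^'p::finite) set" and \<nu> :: "real^'p \<Rightarrow> real" and x0 :: "real^'d::finite"
    and a :: "real^'p \<Rightarrow> (real^'d) \<times> real \<Rightarrow> real^'d"
    and xi :: "real^'p \<Rightarrow> (real^'d) \<times> (real^'d) \<Rightarrow> real"
    and sg :: "real^'d \<Rightarrow> real^'d^'d"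
    and G :: "real^'p \<Rightarrow> real^'d \<Rightarrow> 'y \<Rightarrow> real"
    and y :: "nat \<Rightarrow> 'y" and tix :: "'t::finite \<Rightarrow> nat"
    and \<phi> :: "(real^'p) \<times> (real^'d^'t) \<Rightarrow> real"
  assumes tix: "bij_betw tix UNIV {1..CARD('t)}"
    and Theta_meas: "\<Theta> \<in> sets lborel"
    and nu_meas: "\<nu> \<in> borel_measurable lborel"
    and nu_nonneg: "\<forall>\<theta>\<in>\<Theta>. 0 \<le> \<nu> \<theta>"
    and nu_prob: "(\<integral>\<^sup>+\<theta>\<in>\<Theta>. ennreal (\<nu> \<theta>) \<partial>lborel) = 1"
    and a_meas: "(\<lambda>(\<theta>, z). a \<theta> z) \<in> borel_measurable borel"
    and xi_meas: "(\<lambda>(\<theta>, z). xi \<theta> z) \<in> borel_measurable borel"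
    and A1_a: "\<exists>M. \<forall>\<theta>\<in>\<Theta>. C2b_bd UNIV M (a \<theta>)"
    and A1_xi: "\<exists>M. \<forall>\<theta>\<in>\<Theta>. C2b_bd UNIV M (xi \<theta>)"
    and A1_sigma: "C2b_on UNIV sg"
    and A1_pd: "\<forall>x v. v \<noteq> 0 \<longrightarrow> 0 < v \<bullet> ((sg x ** transpose (sg x)) *v v)"
    and G_bounded: "\<exists>M. \<forall>\<theta>\<in>\<Theta>. \<forall>x yy. G \<theta> x yy \<le> M"
    and A2_smooth: "\<forall>yy. C2b_on (\<Theta> \<times> UNIV) (\<lambda>(\<theta>, x). G \<theta> x yy)"
    and A2_inf: "\<exists>g>0. \<forall>\<theta>\<in>\<Theta>. \<forall>x yy. g \<le> G \<theta> x yy"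
    and phi: "C2b_on (\<Theta> \<times> UNIV) \<phi>"
  shows "\<exists>C. \<forall>l N. 1 \<le> l \<longrightarrow> 1 \<le> N \<longrightarrow>
     check_pi \<Theta> \<nu> a xi sg x0 G y tix l N
       (\<lambda>\<theta> x x'. (\<phi> (\<theta>, x) * (\<Prod>t\<in>UNIV. Hchk G (y (tix t)) \<theta> (x $ t) (x' $ t))
                   - \<phi> (\<theta>, x') * (\<Prod>t\<in>UNIV. Hchk G (y (tix t)) \<theta> (x' $ t) (x $ t)))\<^sup>2)
     \<le> C * Delta l"
proof -
  obtain Ma Mx Ms where Ma: "\<And>\<theta>. \<theta> \<in> \<Theta> \<Longrightarrow> C2b_bd UNIV Ma (a \<theta>)"
      and Mx: "\<And>\<theta>. \<theta> \<in> \<Theta> \<Longrightarrow> C2b_bd UNIV Mx (xi \<theta>)" and Ms: "C2b_bd UNIV Ms sg"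
    using A1_a A1_xi A1_sigma unfolding C2b_on_def by blast
  have K: "\<And>\<theta>. \<theta> \<in> \<Theta> \<Longrightarrow> C2b_bd UNIV (max Ma (max Mx Ms)) (a \<theta>)"
      "\<And>\<theta>. \<theta> \<in> \<Theta> \<Longrightarrow> C2b_bd UNIV (max Ma (max Mx Ms)) (xi \<theta>)" "C2b_bd UNIV (max Ma (max Mx Ms)) sg"
    using C2b_bd_mono[OF Ma] C2b_bd_mono[OF Mx] C2b_bd_mono[OF Ms] by auto
  have "\<exists>M. \<forall>t\<in>UNIV. C2b_bd (\<Theta> \<times> UNIV) M (\<lambda>(\<theta>, x). G \<theta> x (y (tix t)))"
    by (rule C2b_on_finite_uniform) (use A2_smooth in auto)
  then obtain MG where MG: "\<And>t. C2b_bd (\<Theta> \<times> UNIV) MG (\<lambda>(\<theta>, x). G \<theta> x (y (tix t)))"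
    by blast
  obtain Mp where Mp: "C2b_bd (\<Theta> \<times> UNIV) Mp \<phi>"
    using phi unfolding C2b_on_def by blast
  have B: "1 \<le> max 1 (max Mp MG)" "C2b_bd (\<Theta> \<times> UNIV) (max 1 (max Mp MG)) \<phi>"
      "\<And>t. C2b_bd (\<Theta> \<times> UNIV) (max 1 (max Mp MG)) (\<lambda>(\<theta>, x). G \<theta> x (y (tix t)))"
    using C2b_bd_mono[OF Mp] C2b_bd_mono[OF MG] by auto
  obtain g where g: "0 < g" "\<And>\<theta> x yy. \<theta> \<in> \<Theta> \<Longrightarrow> g \<le> G \<theta> x yy"
    using A2_inf by blast
  have tix_le: "tix t \<le> CARD('t)" for t
    using tix by (auto simp: bij_betw_def)
  show ?thesis
    using check_pi_coupled_weight_diff_sq_le[where a = a and xi = xi and G = G and y = y and tix = tix,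
        OF Theta_meas nu_meas nu_nonneg nu_prob K B g tix_le]
    unfolding coupled_weight_diff_sq_def[abs_def] by blast
qed

end
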